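(* Let $X$ be a Wiener--Weierstra\ss\ bridge with $H=1/2$ (so $W$ is a standard Brownian motion and $\kappa$ is H\"older continuous with some exponent $\tau>1/2$), and parameters $\alpha\in(0,1)$, $b\in\{2,3,\dots\}$ with $\alpha^2b=1$. Then $\mathbb P$-a.s., for all $t\in(0,1]$, $$\lim_{n\to\infty}\frac1n\sum_{k=0}^{\lfloor tb^n\rfloor-1}\big(X((k+1)b^{-n})-X(kb^{-n})\big)^2=t .$$ In particular, $\mathbb P$-a.s. the $p$-th variation $\langle X\rangle^{(p)}_1$ is infinite for every $p\le2$ and zero for every $p>2$.
   Context: Let $W=(W(t))_{t\ge0}$ be a fractional Brownian motion with Hurst parameter $H\in(0,1)$. Let $\kappa:[0,1]\to[0,1]$ be a deterministic function with $\kappa(0)=0$, $\kappa(1)=1$ that is H\"older continuous with some exponent $\tau\in(H,1]$. The fractional Brownian bridge is $B(t):=W(t)-\kappa(t)W(1)$, $t\in[0,1]$. For $x\ge0$, $\{x\}$ denotes the fractional part of $x$. For $\alpha\in(0,1)$, $b\in\{2,3,\dots\}$, the fractional Wiener--Weierstra\ss\ bridge is $X(t):=\sum_{n=0}^\infty\alpha^nB(\{b^nt\})$, $0\le t\le1$. For a function $f:[0,1]\to\mathbb R$ and $p>0$, the $p$-th variation along the $b$-adic partitions is $\langle f\rangle^{(p)}_t:=\lim_{n\to\infty}\sum_{k=0}^{\lfloor tb^n\rfloor-1}|f((k+1)b^{-n})-f(kb^{-n})|^p$, $t\in[0,1]$, provided the limit exists (possibly $+\infty$). *)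

theory Defs
  imports "HOL-Probability.Probability"
begin

definition brownian_motion :: "'a measure \<Rightarrow> (real \<Rightarrow> 'a \<Rightarrow> real) \<Rightarrow> bool" where
  "brownian_motion M W \<longleftrightarrow>
     prob_space M \<and>
     (\<forall>t\<ge>0. W t \<in> borel_measurable M) \<and>
     (\<forall>\<omega>\<in>space M. W 0 \<omega> = 0) \<and>
     (\<forall>\<omega>\<in>space M. continuous_on {0..} (\<lambda>t. W t \<omega>)) \<and>
     (\<forall>s t. 0 \<le> s \<and> s < t \<longrightarrow>
        distributed M lborel (\<lambda>\<omega>. W t \<omega> - W s \<omega>) (normal_density 0 (sqrt (t - s)))) \<and>
     (\<forall>(n::nat) (u::nat \<Rightarrow> real). 0 \<le> u 0 \<and> (\<forall>i<n. u i < u (Suc i)) \<longrightarrow>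
        prob_space.indep_vars M (\<lambda>_. borel) (\<lambda>i \<omega>. W (u (Suc i)) \<omega> - W (u i) \<omega>) {..<n})"

definition hoelder_on01 :: "real \<Rightarrow> (real \<Rightarrow> real) \<Rightarrow> bool" where
  "hoelder_on01 \<tau> f \<longleftrightarrow> (\<exists>C. \<forall>s\<in>{0..1}. \<forall>t\<in>{0..1}. \<bar>f s - f t\<bar> \<le> C * \<bar>s - t\<bar> powr \<tau>)"

definition bridge :: "(real \<Rightarrow> 'a \<Rightarrow> real) \<Rightarrow> (real \<Rightarrow> real) \<Rightarrow> real \<Rightarrow> 'a \<Rightarrow> real" where
  "bridge W \<kappa> t \<omega> = W t \<omega> - \<kappa> t * W 1 \<omega>"

definition ww_bridge :: "(real \<Rightarrow> 'a \<Rightarrow> real) \<Rightarrow> (real \<Rightarrow> real) \<Rightarrow> real \<Rightarrow> nat \<Rightarrow> real \<Rightarrow> 'a \<Rightarrow> real" where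
  "ww_bridge W \<kappa> \<alpha> b t \<omega> = (\<Sum>n. \<alpha> ^ n * bridge W \<kappa> (frac (real b ^ n * t)) \<omega>)"

definition pvar_sum :: "(real \<Rightarrow> real) \<Rightarrow> nat \<Rightarrow> real \<Rightarrow> real \<Rightarrow> nat \<Rightarrow> real" where
  "pvar_sum f b p t n =
     (\<Sum>k<nat \<lfloor>t * real b ^ n\<rfloor>. \<bar>f ((real k + 1) / real b ^ n) - f (real k / real b ^ n)\<bar> powr p)"

definition has_pvariation :: "(real \<Rightarrow> real) \<Rightarrow> nat \<Rightarrow> real \<Rightarrow> real \<Rightarrow> ereal \<Rightarrow> bool" where
  "has_pvariation f b p t L \<longleftrightarrow> ((\<lambda>n. ereal (pvar_sum f b p t n)) \<longlongrightarrow> L) sequentially"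

end

theory Submission
  imports Defs "HOL-Number_Theory.Cong"
begin

(* Write X = Y - W(1) K with Y(t) = sum_n alpha^n W({b^n t}) and K(t) = sum_n alpha^n kappa({b^n t}).
   The b-adic increments of Y at level n are linear combinations of the level-n increments of W,
   hence centred Gaussian. In the critical case alpha^2 b = 1 each of them has variance about
   n b^(-n), and counting b-adic digit patterns bounds the Gram matrix of the coefficients, so the
   sum of squared increments up to time t has mean t n + O(1) and bounded variance. Chebyshev's
   inequality and Borel-Cantelli give almost sure convergence of the normalised sums for rational
   t, and monotonicity in t extends it to all t. Since kappa is Hoelder with exponent above 1/2,
   the increments of K are O(alpha^n), so W(1) K does not change the limit. Fourth moments show
   that every increment is eventually below (alpha^(1/4))^n, which yields the p-variation
   dichotomy at p = 2. *)

section \<open>Gaussian linear combinations\<close>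

lemma (in prob_space) centered_normal_moments:
  assumes Z: "distributed M lborel Z (normal_density 0 \<sigma>)" and \<sigma>: "0 < \<sigma>"
  shows "integrable M (\<lambda>\<omega>. Z \<omega> ^ k)"
    and "expectation (\<lambda>\<omega>. Z \<omega> ^ 2) = \<sigma>^2"
    and "expectation (\<lambda>\<omega>. Z \<omega> ^ 4) = 3 * \<sigma>^4"
proof -
  have density_nonneg: "\<And>x. 0 \<le> normal_density 0 \<sigma> x" by (simp add: normal_density_nonneg)
  have "integrable lborel (\<lambda>x. normal_density 0 \<sigma> x * (x - 0)^k)"
    using \<sigma> by (rule integrable_normal_moment)
  then show "integrable M (\<lambda>\<omega>. Z \<omega> ^ k)"
    using distributed_integrable[OF Z, of "\<lambda>x. x ^ k"] density_nonneg by simp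
  have even_moment: "expectation (\<lambda>\<omega>. Z \<omega> ^ (2 * j)) = fact (2 * j) / ((2 / \<sigma>\<^sup>2)^j * fact j)" for j
    using distributed_integral[OF Z, of "\<lambda>x. x ^ (2 * j)"] density_nonneg
      integral_normal_moment_even[of \<sigma> 0 j] \<sigma> by simp
  show "expectation (\<lambda>\<omega>. Z \<omega> ^ 2) = \<sigma>^2"
    using even_moment[of 1] \<sigma> by simp
  show "expectation (\<lambda>\<omega>. Z \<omega> ^ 4) = 3 * \<sigma>^4"
    using even_moment[of 2] \<sigma> by (simp add: fact_numeral power2_eq_square field_simps eval_nat_numeral)
qed

locale gaussian_family = prob_space M for M :: "'a measure" +
  fixes \<xi> :: "nat \<Rightarrow> 'a \<Rightarrow> real" and I :: "nat set" and s :: real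
  assumes finite_I: "finite I" and indep: "indep_vars (\<lambda>_. borel) \<xi> I"
    and normal: "\<And>i. i \<in> I \<Longrightarrow> distributed M lborel (\<xi> i) (normal_density 0 s)"
    and s_pos: "0 < s"
begin

definition lincomb :: "(nat \<Rightarrow> real) \<Rightarrow> 'a \<Rightarrow> real" where
  "lincomb c \<omega> = (\<Sum>i\<in>I. c i * \<xi> i \<omega>)"

definition sqnorm :: "(nat \<Rightarrow> real) \<Rightarrow> real" where
  "sqnorm c = (\<Sum>i\<in>I. (c i)^2)"

definition dot :: "(nat \<Rightarrow> real) \<Rightarrow> (nat \<Rightarrow> real) \<Rightarrow> real" where
  "dot a c = (\<Sum>i\<in>I. a i * c i)"

lemma measurable_xi[measurable]: "i \<in> I \<Longrightarrow> \<xi> i \<in> borel_measurable M"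
  using normal[of i] distributed_measurable[of M lborel "\<xi> i"] by simp

lemma measurable_lincomb[measurable]: "lincomb c \<in> borel_measurable M"
  unfolding lincomb_def[abs_def] by measurable

lemma lincomb_zero_or_normal:
  "(lincomb c = (\<lambda>_. 0) \<and> sqnorm c = 0) \<or>
   (0 < sqnorm c \<and> distributed M lborel (lincomb c) (normal_density 0 (s * sqrt (sqnorm c))))"
proof (cases "\<forall>i\<in>I. c i = 0")
  case True
  then show ?thesis by (auto simp: lincomb_def sqnorm_def)
next
  case False
  define J where "J = {i\<in>I. c i \<noteq> 0}"
  have J: "finite J" "J \<noteq> {}" "J \<subseteq> I" using False finite_I by (auto simp: J_def)
  have lincomb_J: "lincomb c = (\<lambda>\<omega>. \<Sum>i\<in>J. c i * \<xi> i \<omega>)"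
    by (auto simp: lincomb_def J_def intro!: sum.mono_neutral_right finite_I ext)
  have sqnorm_J: "sqnorm c = (\<Sum>i\<in>J. (c i)^2)"
    by (auto simp: sqnorm_def J_def intro!: sum.mono_neutral_right finite_I)
  have indep_J: "indep_vars (\<lambda>_. borel) (\<lambda>i \<omega>. c i * \<xi> i \<omega>) J"
    using indep_vars_compose2[OF indep_vars_subset[OF indep J(3)], of "\<lambda>i x. c i * x" "\<lambda>_. borel"]
    by auto
  have "distributed M lborel (\<lambda>\<omega>. c i * \<xi> i \<omega>) (normal_density 0 (\<bar>c i\<bar> * s))" if "i \<in> J" for i
    using normal_density_affine[OF normal[of i] s_pos, of "c i" 0] that J by (auto simp: J_def)
  then have "distributed M lborel (\<lambda>\<omega>. \<Sum>i\<in>J. c i * \<xi> i \<omega>)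
          (normal_density (\<Sum>i\<in>J. 0) (sqrt (\<Sum>i\<in>J. (\<bar>c i\<bar> * s)\<^sup>2)))"
    using J s_pos by (intro sum_indep_normal indep_J) (auto simp: J_def)
  moreover have "sqrt (\<Sum>i\<in>J. (\<bar>c i\<bar> * s)\<^sup>2) = s * sqrt (\<Sum>i\<in>J. (c i)^2)"
    using s_pos by (simp add: power_mult_distrib sum_distrib_right[symmetric] real_sqrt_mult)
  moreover have "0 < (\<Sum>i\<in>J. (c i)^2)"
    using J by (intro sum_pos) (auto simp: J_def)
  ultimately show ?thesis using lincomb_J sqnorm_J by simp
qed

lemma lincomb_moments:
  shows integrable_lincomb_power: "integrable M (\<lambda>\<omega>. lincomb c \<omega> ^ k)"
    and expectation_lincomb_sq: "expectation (\<lambda>\<omega>. lincomb c \<omega> ^ 2) = s^2 * sqnorm c"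
    and expectation_lincomb_pow4: "expectation (\<lambda>\<omega>. lincomb c \<omega> ^ 4) = 3 * s^4 * (sqnorm c)^2"
proof -
  have "integrable M (\<lambda>\<omega>. lincomb c \<omega> ^ k) \<and>
        expectation (\<lambda>\<omega>. lincomb c \<omega> ^ 2) = s^2 * sqnorm c \<and>
        expectation (\<lambda>\<omega>. lincomb c \<omega> ^ 4) = 3 * s^4 * (sqnorm c)^2"
    using lincomb_zero_or_normal[of c]
  proof (elim disjE conjE)
    assume pos: "0 < sqnorm c"
      and normal_c: "distributed M lborel (lincomb c) (normal_density 0 (s * sqrt (sqnorm c)))"
    have "sqrt (sqnorm c) ^ 4 = (sqrt (sqnorm c) ^ 2) ^ 2"
      by (simp flip: power_mult)
    then have "sqrt (sqnorm c) ^ 4 = (sqnorm c)^2"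
      using pos by simp
    then show ?thesis
      using centered_normal_moments[OF normal_c] pos s_pos by (simp add: power_mult_distrib)
  qed simp
  then show "integrable M (\<lambda>\<omega>. lincomb c \<omega> ^ k)"
    and "expectation (\<lambda>\<omega>. lincomb c \<omega> ^ 2) = s^2 * sqnorm c"
    and "expectation (\<lambda>\<omega>. lincomb c \<omega> ^ 4) = 3 * s^4 * (sqnorm c)^2"
    by auto
qed

lemma lincomb_add: "lincomb (\<lambda>i. a i + c i) \<omega> = lincomb a \<omega> + lincomb c \<omega>"
  by (simp add: lincomb_def distrib_right sum.distrib)

lemma lincomb_diff: "lincomb (\<lambda>i. a i - c i) \<omega> = lincomb a \<omega> - lincomb c \<omega>"
  by (simp add: lincomb_def left_diff_distrib sum_subtractf)

lemma sqnorm_add: "sqnorm (\<lambda>i. a i + c i) = sqnorm a + sqnorm c + 2 * dot a c"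
  by (simp add: sqnorm_def dot_def power2_sum sum.distrib sum_distrib_left mult.assoc)

lemma sqnorm_diff: "sqnorm (\<lambda>i. a i - c i) = sqnorm a + sqnorm c - 2 * dot a c"
  by (simp add: sqnorm_def dot_def power2_diff sum.distrib sum_subtractf sum_distrib_left mult.assoc)

lemma sq_mult_sq_polarization:
  "lincomb a \<omega> ^ 2 * lincomb c \<omega> ^ 2 =
     (lincomb (\<lambda>i. a i + c i) \<omega> ^ 4 + lincomb (\<lambda>i. a i - c i) \<omega> ^ 4
      - 2 * lincomb a \<omega> ^ 4 - 2 * lincomb c \<omega> ^ 4) / 12"
  by (auto simp: lincomb_add lincomb_diff field_simps eval_nat_numeral)

lemma integrable_sq_mult_sq: "integrable M (\<lambda>\<omega>. lincomb a \<omega> ^ 2 * lincomb c \<omega> ^ 2)"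
  unfolding sq_mult_sq_polarization
  by (intro integrable_divide Bochner_Integration.integrable_diff Bochner_Integration.integrable_add
      integrable_mult_right integrable_lincomb_power)

text \<open>Isserlis' formula for two jointly Gaussian variables, obtained by polarization from the
  fourth moments.\<close>
lemma expectation_sq_mult_sq:
  "expectation (\<lambda>\<omega>. lincomb a \<omega> ^ 2 * lincomb c \<omega> ^ 2) = s^4 * (sqnorm a * sqnorm c + 2 * (dot a c)^2)"
proof -
  have "expectation (\<lambda>\<omega>. lincomb a \<omega> ^ 2 * lincomb c \<omega> ^ 2) =
     (3 * s^4 * (sqnorm (\<lambda>i. a i + c i))^2 + 3 * s^4 * (sqnorm (\<lambda>i. a i - c i))^2
      - 2 * (3 * s^4 * (sqnorm a)^2) - 2 * (3 * s^4 * (sqnorm c)^2)) / 12"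
    unfolding sq_mult_sq_polarization
    by (simp add: Bochner_Integration.integral_diff Bochner_Integration.integral_add
        Bochner_Integration.integrable_diff Bochner_Integration.integrable_add
        integrable_mult_right integrable_lincomb_power expectation_lincomb_pow4)
  also have "\<dots> = s^4 * (sqnorm a * sqnorm c + 2 * (dot a c)^2)"
    unfolding sqnorm_add sqnorm_diff by (simp add: field_simps eval_nat_numeral)
  finally show ?thesis .
qed

lemma sum_sq_lincomb_variance:
  fixes C :: "nat \<Rightarrow> nat \<Rightarrow> real"
  assumes "finite K"
  defines "m \<equiv> s^2 * (\<Sum>k\<in>K. sqnorm (C k))"
  shows "integrable M (\<lambda>\<omega>. ((\<Sum>k\<in>K. lincomb (C k) \<omega> ^ 2) - m)^2)"
    and "expectation (\<lambda>\<omega>. ((\<Sum>k\<in>K. lincomb (C k) \<omega> ^ 2) - m)^2) =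
           2 * s^4 * (\<Sum>k\<in>K. \<Sum>l\<in>K. (dot (C k) (C l))^2)"
proof -
  have expand: "(\<lambda>\<omega>. ((\<Sum>k\<in>K. lincomb (C k) \<omega> ^ 2) - m)^2) =
    (\<lambda>\<omega>. (\<Sum>k\<in>K. \<Sum>l\<in>K. lincomb (C k) \<omega> ^ 2 * lincomb (C l) \<omega> ^ 2)
          - 2 * m * (\<Sum>k\<in>K. lincomb (C k) \<omega> ^ 2) + m^2)"
    by (simp add: power2_diff power2_eq_square[of "sum _ _"] sum_product algebra_simps)
  have int_fourth: "integrable M (\<lambda>x. \<Sum>k\<in>K. \<Sum>l\<in>K. (lincomb (C k) x)\<^sup>2 * (lincomb (C l) x)\<^sup>2)"
    by (intro Bochner_Integration.integrable_sum integrable_sq_mult_sq)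
  have int_second: "integrable M (\<lambda>x. \<Sum>k\<in>K. (lincomb (C k) x)\<^sup>2)"
    by (intro Bochner_Integration.integrable_sum integrable_lincomb_power)
  show "integrable M (\<lambda>\<omega>. ((\<Sum>k\<in>K. lincomb (C k) \<omega> ^ 2) - m)^2)"
    unfolding expand using int_fourth int_second
    by (intro Bochner_Integration.integrable_add Bochner_Integration.integrable_diff integrable_mult_right) auto
  have "expectation (\<lambda>\<omega>. ((\<Sum>k\<in>K. lincomb (C k) \<omega> ^ 2) - m)^2) =
    (\<Sum>k\<in>K. \<Sum>l\<in>K. s^4 * (sqnorm (C k) * sqnorm (C l) + 2 * (dot (C k) (C l))^2))
      - 2 * m * (\<Sum>k\<in>K. s^2 * sqnorm (C k)) + m^2"
    unfolding expand using int_fourth int_second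
    by (simp add: Bochner_Integration.integral_diff Bochner_Integration.integral_add
        Bochner_Integration.integrable_diff Bochner_Integration.integrable_add
        Bochner_Integration.integrable_sum integrable_mult_right integrable_sq_mult_sq
        integrable_lincomb_power expectation_sq_mult_sq expectation_lincomb_sq prob_space)
  also have "\<dots> = 2 * s^4 * (\<Sum>k\<in>K. \<Sum>l\<in>K. (dot (C k) (C l))^2)"
  proof -
    have "(\<Sum>k\<in>K. sqnorm (C k) * (\<Sum>l\<in>K. sqnorm (C l))) = (\<Sum>k\<in>K. sqnorm (C k)) * (\<Sum>k\<in>K. sqnorm (C k))"
      by (simp add: sum_distrib_right)
    then show ?thesis unfolding m_def
      by (simp add: sum.distrib distrib_left sum_distrib_left[symmetric] sum_product[symmetric]
          power2_eq_square algebra_simps eval_nat_numeral)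
  qed
  finally show "expectation (\<lambda>\<omega>. ((\<Sum>k\<in>K. lincomb (C k) \<omega> ^ 2) - m)^2) =
      2 * s^4 * (\<Sum>k\<in>K. \<Sum>l\<in>K. (dot (C k) (C l))^2)" .
qed

end

section \<open>Counting b-adic digits\<close>

lemma sum_lessThan_mult_nested:
  fixes f :: "nat \<Rightarrow> 'b::comm_monoid_add"
  shows "(\<Sum>i<A*B. f i) = (\<Sum>R<A. \<Sum>s<B. f (R*B + s))"
proof -
  have "(\<Sum>i\<in>{R*B..<R*B + B}. f i) = (\<Sum>s<B. f (R*B + s))" for R
    using sum.shift_bounds_nat_ivl[of f 0 "R*B" B] by (simp add: atLeast0LessThan add.commute)
  then show ?thesis
    using sum.nat_group[of "\<lambda>i. f i" B A] by simp
qed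

lemma sum_indicator_div_eq:
  assumes "r < A" "0 < B"
  shows "(\<Sum>i<A*B. (if i div B = r then 1 else 0 :: real)) = real B"
proof -
  have "(\<Sum>i<A*B. (if i div B = r then 1 else 0 :: real)) =
        (\<Sum>R<A. \<Sum>s<B. (if (R*B+s) div B = r then 1 else 0 :: real))"
    by (rule sum_lessThan_mult_nested)
  also have "\<dots> = (\<Sum>R<A. if R = r then real B else 0)"
    using assms by (intro sum.cong refl) auto
  finally show ?thesis using assms by simp
qed

lemma sum_indicator_mod_eq:
  assumes "r < B"
  shows "(\<Sum>i<A*B. (if i mod B = r then 1 else 0 :: real)) = real A"
proof -
  have "(\<Sum>i<A*B. (if i mod B = r then 1 else 0 :: real)) =
        (\<Sum>R<A. \<Sum>s<B. (if (R*B+s) mod B = r then 1 else 0 :: real))"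
    by (rule sum_lessThan_mult_nested)
  also have "\<dots> = (\<Sum>R<A. \<Sum>s<B. (if s = r then 1 else 0 :: real))"
    by (intro sum.cong refl) auto
  finally show ?thesis using assms by simp
qed

lemma dvd_if_cong_mult_self:
  fixes x B Q :: int
  assumes "[x = x * B] (mod Q)" and "Q dvd B ^ k"
  shows "Q dvd x"
proof -
  have "[x = x * B ^ j] (mod Q)" for j
  proof (induction j)
    case (Suc j)
    have "[x * B ^ j = x * B * B ^ j] (mod Q)"
      using cong_mult[OF assms(1) cong_refl[of "B ^ j"]] by simp
    then show ?case using Suc cong_trans by (simp add: ac_simps)
  qed simp
  then have "[x = x * B ^ k] (mod Q)" .
  moreover have "Q dvd x * B ^ k" using assms(2) by simp
  ultimately show ?thesis using cong_dvd_iff by blast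
qed

text \<open>A number below \<open>b^(j+d)\<close> whose top digits (\<open>R div b^d\<close>) repeat its bottom digits
  (\<open>R mod b^j\<close>) is determined by its last \<open>d\<close> digits: the top part \<open>q\<close> solves
  \<open>q \<equiv> q b^d + (R mod b^d) (mod b^j)\<close>, and the difference of two solutions is a fixed point
  of multiplication by \<open>b^d\<close> modulo \<open>b^j\<close>, hence divisible by \<open>b^j\<close>.\<close>
lemma inj_on_mod_digits_repeat:
  fixes b j d :: nat
  assumes b: "2 \<le> b" and d: "1 \<le> d"
  shows "inj_on (\<lambda>R. R mod b ^ d) {R. R < b ^ (j + d) \<and> R div b ^ d = R mod b ^ j}"
proof (rule inj_onI)
  fix R1 R2
  assume R1: "R1 \<in> {R. R < b ^ (j + d) \<and> R div b ^ d = R mod b ^ j}"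
    and R2: "R2 \<in> {R. R < b ^ (j + d) \<and> R div b ^ d = R mod b ^ j}"
    and same_low: "R1 mod b ^ d = R2 mod b ^ d"
  define q1 where "q1 = R1 div b ^ d"
  define q2 where "q2 = R2 div b ^ d"
  define r where "r = R1 mod b ^ d"
  have R1_eq: "R1 = q1 * b ^ d + r" using div_mult_mod_eq[of R1 "b^d"] by (simp add: q1_def r_def)
  have R2_eq: "R2 = q2 * b ^ d + r" using div_mult_mod_eq[of R2 "b^d"] by (simp add: q2_def r_def same_low)
  have q_less: "q1 < b ^ j" "q2 < b ^ j"
    using R1 R2 b by (simp_all add: q1_def q2_def less_mult_imp_div_less power_add)
  have "(q1 * b ^ d + r) mod b ^ j = q1 mod b ^ j" "(q2 * b ^ d + r) mod b ^ j = q2 mod b ^ j"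
    using R1 R2 by (simp_all only: R1_eq[symmetric] R2_eq[symmetric]) (simp_all add: q1_def q2_def)
  then have "[q1 = q1 * b ^ d + r] (mod b ^ j)" "[q2 = q2 * b ^ d + r] (mod b ^ j)"
    by (simp_all add: cong_def)
  then have "[int q1 = int q1 * int b ^ d + int r] (mod int (b ^ j))"
    "[int q2 = int q2 * int b ^ d + int r] (mod int (b ^ j))"
    unfolding cong_int_iff[symmetric] by simp_all
  from cong_diff[OF this]
  have "[int q1 - int q2 = (int q1 - int q2) * int b ^ d] (mod int (b ^ j))"
    by (simp add: algebra_simps)
  moreover have "int (b ^ j) dvd (int b ^ d) ^ j"
    using d by (simp add: power_mult[symmetric] le_imp_power_dvd)
  ultimately have "int (b ^ j) dvd int q1 - int q2"
    by (rule dvd_if_cong_mult_self)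
  moreover have "\<bar>int q1 - int q2\<bar> < int (b ^ j)" using q_less by linarith
  ultimately have "q1 = q2"
    using dvd_imp_le_int[of "int q1 - int q2" "int (b ^ j)"] by fastforce
  then show "R1 = R2" using R1_eq R2_eq by simp
qed

lemma card_mod_digits_repeat_le:
  fixes b j d :: nat
  assumes "2 \<le> b" and "1 \<le> d"
  shows "card {R. R < b ^ (j + d) \<and> R div b ^ d = R mod b ^ j} \<le> b ^ d"
proof -
  have "card {R. R < b ^ (j + d) \<and> R div b ^ d = R mod b ^ j} \<le> card {..<b ^ d}"
    by (rule card_inj_on_le[OF inj_on_mod_digits_repeat[OF assms]]) (use assms in auto)
  then show ?thesis by simp
qed

lemma sum_power_diff_le:
  fixes r :: real assumes "0 \<le> r" "r < 1"
  shows "(\<Sum>m<n. r ^ (n - m)) \<le> 1 / (1 - r)"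
proof -
  have "(\<Sum>m<n. r ^ (n - m)) = (\<Sum>i<n. r ^ (i + 1))"
    by (rule sum.reindex_bij_witness[of _ "\<lambda>i. n - Suc i" "\<lambda>m. n - Suc m"])
      (auto simp: Suc_diff_Suc simp flip: power_Suc)
  also have "\<dots> \<le> (\<Sum>i<n. r ^ i)"
    using assms by (intro sum_mono) (simp add: mult_left_le_one_le)
  also have "\<dots> = (1 - r ^ n) / (1 - r)"
    using assms by (simp add: sum_gp_strict)
  also have "\<dots> \<le> 1 / (1 - r)"
    using assms by (intro divide_right_mono) auto
  finally show ?thesis .
qed

lemma Cauchy_Schwarz_weighted_sum:
  fixes x w :: "'i \<Rightarrow> real"
  assumes "\<And>p. p \<in> P \<Longrightarrow> 0 < w p"
  shows "(\<Sum>p\<in>P. x p)\<^sup>2 \<le> (\<Sum>p\<in>P. w p) * (\<Sum>p\<in>P. (x p)\<^sup>2 / w p)"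
proof -
  have "(\<Sum>p\<in>P. sqrt (w p) * (x p / sqrt (w p)))\<^sup>2
          \<le> (\<Sum>p\<in>P. (sqrt (w p))\<^sup>2) * (\<Sum>p\<in>P. (x p / sqrt (w p))\<^sup>2)"
    by (rule Cauchy_Schwarz_ineq_sum)
  moreover have "(\<Sum>p\<in>P. sqrt (w p) * (x p / sqrt (w p))) = (\<Sum>p\<in>P. x p)"
    by (intro sum.cong refl) (force dest: assms)
  moreover have "(\<Sum>p\<in>P. (sqrt (w p))\<^sup>2) = (\<Sum>p\<in>P. w p)"
    using assms by (intro sum.cong refl) (simp add: less_imp_le)
  moreover have "(\<Sum>p\<in>P. (x p / sqrt (w p))\<^sup>2) = (\<Sum>p\<in>P. (x p)\<^sup>2 / w p)"
    using assms by (intro sum.cong refl) (simp add: power_divide less_imp_le)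
  ultimately show ?thesis by simp
qed

section \<open>Weierstrass sums on b-adic grids\<close>

lemma frac_of_nat_divide:
  assumes "0 < c"
  shows "frac (real a / real c) = real (a mod c) / real c"
proof -
  have "real a = real (a div c) * real c + real (a mod c)"
    by (metis of_nat_add of_nat_mult div_mult_mod_eq)
  then have "real a / real c - real (a mod c) / real c = real (a div c)"
    using assms by (simp add: field_simps)
  moreover have "real (a mod c) < real c" using assms by simp
  ultimately show ?thesis using assms unfolding frac_unique_iff
    by (metis Ints_of_nat divide_less_eq_1_pos divide_nonneg_nonneg of_nat_0_le_iff of_nat_0_less_iff)
qed

lemma weierstrass_sum_at_grid:
  fixes f :: "real \<Rightarrow> real" and b :: nat and \<alpha> :: real
  assumes b: "1 \<le> b" and f0: "f 0 = 0"
  shows "(\<Sum>m. \<alpha> ^ m * f (frac (real b ^ m * (real a / real b ^ n)))) =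
         (\<Sum>m<n. \<alpha> ^ m * f (real (a mod b ^ (n - m)) / real b ^ (n - m)))"
proof -
  have vanishing: "\<alpha> ^ m * f (frac (real b ^ m * (real a / real b ^ n))) = 0" if "m \<notin> {..<n}" for m
  proof -
    have b_power: "real b ^ m = real b ^ n * real b ^ (m-n)" using that by (simp flip: power_add)
    have "real b ^ m * (real a / real b ^ n) = real (a * b ^ (m - n))"
      using b unfolding b_power by (simp add: field_simps)
    then show ?thesis using f0 by (simp add: frac_def)
  qed
  have "(\<Sum>m. \<alpha> ^ m * f (frac (real b ^ m * (real a / real b ^ n)))) =
        (\<Sum>m<n. \<alpha> ^ m * f (frac (real b ^ m * (real a / real b ^ n))))"
    by (rule suminf_finite) (use vanishing in auto)
  also have "\<dots> = (\<Sum>m<n. \<alpha> ^ m * f (real (a mod b ^ (n - m)) / real b ^ (n - m)))"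
  proof (rule sum.cong)
    fix m assume m: "m \<in> {..<n}"
    have b_power: "real b ^ n = real b ^ m * real b ^ (n-m)" using m by (simp flip: power_add)
    have "real b ^ m * (real a / real b ^ n) = real a / real (b ^ (n - m))"
      using b unfolding b_power by (simp add: field_simps)
    then show "\<alpha> ^ m * f (frac (real b ^ m * (real a / real b ^ n))) =
               \<alpha> ^ m * f (real (a mod b ^ (n - m)) / real b ^ (n - m))"
      using frac_of_nat_divide[of "b ^ (n - m)" a] b by simp
  qed simp
  finally show ?thesis .
qed

lemma periodic_at_succ_mod:
  fixes f :: "real \<Rightarrow> real" and b :: nat
  assumes b: "1 \<le> b" and f0: "f 0 = f 1"
  shows "f (real ((k + 1) mod b ^ j) / real b ^ j) = f ((real (k mod b ^ j) + 1) / real b ^ j)"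
proof (cases "Suc (k mod b ^ j) = b ^ j")
  case False
  then have "(k + 1) mod b ^ j = k mod b ^ j + 1"
    by (simp add: mod_Suc)
  then show ?thesis by (simp add: add.commute)
next
  case True
  then have "(k + 1) mod b ^ j = 0"
    by (simp add: mod_Suc)
  moreover have "real (k mod b ^ j) + 1 = real b ^ j"
    using True by (metis of_nat_Suc of_nat_power add.commute)
  moreover have "real b ^ j \<noteq> 0" using b by simp
  ultimately show ?thesis using f0 by simp
qed

definition weierstrass_increment :: "(real \<Rightarrow> real) \<Rightarrow> real \<Rightarrow> nat \<Rightarrow> nat \<Rightarrow> nat \<Rightarrow> real" where
  "weierstrass_increment f \<alpha> b n k =
     (\<Sum>m<n. \<alpha> ^ m * (f ((real (k mod b ^ (n - m)) + 1) / real b ^ (n - m))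
                        - f (real (k mod b ^ (n - m)) / real b ^ (n - m))))"

text \<open>Only the terms \<open>m < n\<close> of the Weierstrass sum \<open>\<Sum>m. \<alpha>^m f {b^m t}\<close> contribute to its increment
  over a \<open>b\<close>-adic interval of level \<open>n\<close>; the \<open>m\<close>-th one is an increment of \<open>f\<close> over a
  \<open>b\<close>-adic interval of level \<open>n - m\<close>.\<close>
lemma weierstrass_sum_grid_increment:
  fixes f :: "real \<Rightarrow> real" and b :: nat and \<alpha> :: real
  assumes b: "1 \<le> b" and f0: "f 0 = 0" and f1: "f 1 = 0"
  shows "(\<Sum>m. \<alpha> ^ m * f (frac (real b ^ m * ((real k + 1) / real b ^ n)))) -
         (\<Sum>m. \<alpha> ^ m * f (frac (real b ^ m * (real k / real b ^ n)))) =
         weierstrass_increment f \<alpha> b n k"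
proof -
  have "(\<Sum>m. \<alpha> ^ m * f (frac (real b ^ m * ((real k + 1) / real b ^ n)))) =
        (\<Sum>m<n. \<alpha> ^ m * f (real ((k+1) mod b ^ (n - m)) / real b ^ (n - m)))"
    using weierstrass_sum_at_grid[where f=f, OF b f0, of \<alpha> "Suc k" n] by (simp add: add.commute)
  also have "\<dots> = (\<Sum>m<n. \<alpha> ^ m * f ((real (k mod b ^ (n - m)) + 1) / real b ^ (n - m)))"
    using periodic_at_succ_mod[OF b, of f] f0 f1 by simp
  finally show ?thesis
    using weierstrass_sum_at_grid[where f=f, OF b f0, of \<alpha> k n]
    by (simp add: weierstrass_increment_def sum_subtractf right_diff_distrib)
qed

lemma sum_block_telescope:
  fixes g :: "nat \<Rightarrow> real"
  assumes "r < A"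
  shows "(\<Sum>i<A*B. (if i div B = r then 1 else 0) * (g (Suc i) - g i)) = g ((r+1)*B) - g (r*B)"
proof (cases "B = 0")
  case True then show ?thesis by simp
next
  case False
  have "(\<Sum>i<A*B. (if i div B = r then 1 else 0) * (g (Suc i) - g i)) =
     (\<Sum>R<A. \<Sum>s<B. (if (R*B+s) div B = r then 1 else 0) * (g (Suc (R*B+s)) - g (R*B+s)))"
    by (rule sum_lessThan_mult_nested)
  also have "\<dots> = (\<Sum>R<A. if R = r then (\<Sum>s<B. g (Suc (r*B+s)) - g (r*B+s)) else 0)"
    using False by (intro sum.cong refl) auto
  also have "\<dots> = (\<Sum>s<B. g (Suc (r*B+s)) - g (r*B+s))"
    using assms by simp
  also have "\<dots> = g (r*B + B) - g (r*B + 0)"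
    using sum_lessThan_telescope[of "\<lambda>s. g (r*B+s)" B] by simp
  finally show ?thesis by (simp add: add.commute)
qed

lemma brownian_motion_grid_gaussian_family:
  assumes BM: "brownian_motion M W" and b: "0 < b"
  shows "gaussian_family M (\<lambda>i \<omega>. W ((real i + 1) / real b ^ n) \<omega> - W (real i / real b ^ n) \<omega>)
           {..<b^n} (sqrt (1 / real b ^ n))"
proof -
  interpret prob_space M using BM by (simp add: brownian_motion_def)
  define u where "u i = real i / real b ^ n" for i
  have u_Suc: "u (Suc i) = (real i + 1) / real b ^ n" for i by (simp add: u_def)
  have u_increasing: "0 \<le> u 0" "\<forall>i<b^n. u i < u (Suc i)"
    using b by (auto simp: u_def divide_strict_right_mono)
  have gaussian: "\<forall>s t. 0 \<le> s \<and> s < t \<longrightarrow>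
      distributed M lborel (\<lambda>\<omega>. W t \<omega> - W s \<omega>) (normal_density 0 (sqrt (t - s)))"
    using BM unfolding brownian_motion_def by blast
  show ?thesis
  proof
    have "indep_vars (\<lambda>_. borel) (\<lambda>i \<omega>. W (u (Suc i)) \<omega> - W (u i) \<omega>) {..<b^n}"
      using BM u_increasing unfolding brownian_motion_def by blast
    then show "indep_vars (\<lambda>_. borel) (\<lambda>i \<omega>. W ((real i + 1) / real b ^ n) \<omega> - W (real i / real b ^ n) \<omega>) {..<b^n}"
      by (simp add: u_Suc u_def add.commute)
    fix i
    have "0 \<le> u i \<and> u i < u (Suc i)" using b by (auto simp: u_def divide_strict_right_mono)
    moreover have "u (Suc i) - u i = 1 / real b ^ n"
      by (simp add: u_def diff_divide_distrib[symmetric])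
    ultimately show "distributed M lborel (\<lambda>\<omega>. W ((real i + 1) / real b ^ n) \<omega> - W (real i / real b ^ n) \<omega>)
        (normal_density 0 (sqrt (1 / real b ^ n)))"
      using gaussian[rule_format, of "u i" "u (Suc i)"] by (simp add: u_Suc u_def add.commute)
  qed (use b in simp_all)
qed

lemma sum_cell_increment:
  fixes g :: "real \<Rightarrow> real" and b :: nat
  assumes b: "0 < b" and m: "m \<le> n"
  shows "(\<Sum>i<b^n. (if i div b ^ m = k mod b ^ (n - m) then 1 else 0) * (g ((real i + 1) / real b ^ n) - g (real i / real b ^ n)))
     = g ((real (k mod b ^ (n - m)) + 1) / real b ^ (n - m)) - g (real (k mod b ^ (n - m)) / real b ^ (n - m))"
proof -
  define r where "r = k mod b ^ (n - m)"
  have r: "r < b ^ (n - m)" using b by (simp add: r_def)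
  have bn: "b ^ n = b ^ (n - m) * b ^ m" using m by (simp flip: power_add)
  have "(\<Sum>i<b ^ (n - m) * b ^ m. (if i div b ^ m = r then 1 else 0) * ((\<lambda>i. g (real i / real b ^ n)) (Suc i) - (\<lambda>i. g (real i / real b ^ n)) i))
     = g (real ((r+1) * b ^ m) / real b ^ n) - g (real (r * b ^ m) / real b ^ n)"
    by (rule sum_block_telescope[OF r])
  moreover have "real ((r+1) * b ^ m) / real b ^ n = (real r + 1) / real b ^ (n - m)"
    "real (r * b ^ m) / real b ^ n = real r / real b ^ (n - m)"
  proof -
    have bnr: "real b ^ n = real b ^ (n - m) * real b ^ m" using bn by (metis of_nat_mult of_nat_power)
    show "real ((r+1) * b ^ m) / real b ^ n = (real r + 1) / real b ^ (n - m)"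
      "real (r * b ^ m) / real b ^ n = real r / real b ^ (n - m)"
      using b unfolding bnr by (simp_all add: field_simps)
  qed
  ultimately show ?thesis unfolding bn r_def by (simp add: add.commute)
qed

lemma weierstrass_increment_eq_sum_fine:
  assumes b: "0 < b"
  shows "weierstrass_increment f \<alpha> b n k =
           (\<Sum>i<b^n. (\<Sum>m<n. \<alpha> ^ m * (if i div b ^ m = k mod b ^ (n - m) then 1 else 0)) *
                      (f ((real i + 1) / real b ^ n) - f (real i / real b ^ n)))"
proof -
  have "(\<Sum>i<b^n. (\<Sum>m<n. \<alpha> ^ m * (if i div b ^ m = k mod b ^ (n - m) then 1 else 0)) *
             (f ((real i + 1) / real b ^ n) - f (real i / real b ^ n)))
    = (\<Sum>m<n. \<alpha> ^ m * (\<Sum>i<b^n. (if i div b ^ m = k mod b ^ (n - m) then 1 else 0) *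
             (f ((real i + 1) / real b ^ n) - f (real i / real b ^ n))))"
    by (simp add: sum_distrib_right sum_distrib_left sum.swap[of _ "{..<b^n}"] mult.assoc)
  also have "\<dots> = weierstrass_increment f \<alpha> b n k"
    unfolding weierstrass_increment_def using sum_cell_increment[OF b, where g=f and n=n and k=k]
    by (intro sum.cong refl) simp
  finally show ?thesis by simp
qed

lemma abs_grid_increment_hoelder_le:
  fixes f :: "real \<Rightarrow> real" and b j r :: nat
  assumes hoelder: "\<forall>s\<in>{0..1}. \<forall>t\<in>{0..1}. \<bar>f s - f t\<bar> \<le> C * \<bar>s - t\<bar> powr \<tau>"
    and b: "0 < b" and r: "r < b ^ j"
  shows "\<bar>f ((real r + 1) / real b ^ j) - f (real r / real b ^ j)\<bar> \<le> C * (real b powr (- \<tau>)) ^ j"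
proof -
  have bj: "0 < real b ^ j" using b by simp
  have "real r + 1 \<le> real b ^ j"
    using r by (metis Suc_eq_plus1 Suc_leI of_nat_1 of_nat_add of_nat_le_iff of_nat_power)
  then have grid_points: "(real r + 1) / real b ^ j \<in> {0..1}" "real r / real b ^ j \<in> {0..1}"
    using bj r by (simp_all add: divide_le_eq_1_pos)
  have "\<bar>(real r + 1) / real b ^ j - real r / real b ^ j\<bar> = 1 / real b ^ j"
    using bj by (simp add: diff_divide_distrib[symmetric])
  moreover have "(1 / real b ^ j) powr \<tau> = (real b powr (- \<tau>)) ^ j"
    using b by (smt (verit) powr_gt_zero powr_minus_divide powr_powr_swap powr_realpow of_nat_0_less_iff)
  ultimately show ?thesis
    using hoelder[rule_format, OF grid_points] by simp
qed

text \<open>Since \<open>\<alpha> = b^(-1/2)\<close>, the \<open>m\<close>-th term of the increment is at most \<open>C \<alpha>^n \<gamma>^(n-m)\<close>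
  with \<open>\<gamma> = b^(1/2 - \<tau>) < 1\<close>.\<close>
lemma abs_weierstrass_increment_hoelder_le:
  fixes f :: "real \<Rightarrow> real" and b :: nat
  assumes hoelder: "\<forall>s\<in>{0..1}. \<forall>t\<in>{0..1}. \<bar>f s - f t\<bar> \<le> C * \<bar>s - t\<bar> powr \<tau>"
    and C: "0 \<le> C" and \<tau>: "1/2 < \<tau>" and b: "2 \<le> b"
    and \<alpha>: "0 < \<alpha>" and crit: "\<alpha>\<^sup>2 * real b = 1"
  shows "\<bar>weierstrass_increment f \<alpha> b n k\<bar> \<le> C / (1 - real b powr (1/2 - \<tau>)) * \<alpha> ^ n"
proof -
  define \<gamma> where "\<gamma> = real b powr (1/2 - \<tau>)"
  have \<gamma>: "0 \<le> \<gamma>" "\<gamma> < 1"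
    using b \<tau> by (auto simp: \<gamma>_def powr_less_one)
  have inverse_alpha: "1 / \<alpha> = real b powr (1/2)"
  proof -
    have "(1 / \<alpha>)\<^sup>2 = real b" using crit \<alpha> by (simp add: field_simps)
    then show ?thesis
      using \<alpha> b by (simp add: powr_half_sqrt real_sqrt_unique[symmetric])
  qed
  have term_le: "\<bar>\<alpha> ^ m * (f ((real (k mod b ^ (n - m)) + 1) / real b ^ (n - m))
                            - f (real (k mod b ^ (n - m)) / real b ^ (n - m)))\<bar>
                   \<le> C * (\<alpha> ^ n * \<gamma> ^ (n - m))" if "m < n" for m
  proof -
    have "\<alpha> ^ m = \<alpha> ^ n * (1 / \<alpha>) ^ (n - m)"
      using \<alpha> \<open>m < n\<close> by (simp add: field_simps flip: power_add)
    also have "\<dots> = \<alpha> ^ n * (real b powr (1/2)) ^ (n - m)" by (simp add: inverse_alpha)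
    finally have "\<alpha> ^ m * (C * (real b powr (- \<tau>)) ^ (n - m)) = C * (\<alpha> ^ n * \<gamma> ^ (n - m))"
      by (simp add: \<gamma>_def power_mult_distrib[symmetric] powr_add[symmetric] algebra_simps)
    moreover have "\<bar>f ((real (k mod b ^ (n - m)) + 1) / real b ^ (n - m))
                     - f (real (k mod b ^ (n - m)) / real b ^ (n - m))\<bar> \<le> C * (real b powr (- \<tau>)) ^ (n - m)"
      using b by (intro abs_grid_increment_hoelder_le[OF hoelder]) auto
    ultimately show ?thesis
      using \<alpha> by (metis abs_mult abs_of_pos mult_left_mono zero_less_power less_imp_le)
  qed
  have "\<bar>weierstrass_increment f \<alpha> b n k\<bar> \<le> (\<Sum>m<n. C * (\<alpha> ^ n * \<gamma> ^ (n - m)))"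
    unfolding weierstrass_increment_def
    by (rule order_trans[OF sum_abs sum_mono]) (simp add: term_le)
  also have "\<dots> = C * \<alpha> ^ n * (\<Sum>m<n. \<gamma> ^ (n - m))"
    by (simp add: sum_distrib_left algebra_simps)
  also have "\<dots> \<le> C * \<alpha> ^ n * (1 / (1 - \<gamma>))"
    using sum_power_diff_le[OF \<gamma>] C \<alpha> by (intro mult_left_mono) auto
  finally show ?thesis by (simp add: \<gamma>_def)
qed

section \<open>The coefficient Gram matrix in the critical case\<close>

text \<open>\<open>coef k i\<close> is the coefficient of the \<open>i\<close>-th level-\<open>n\<close> increment of \<open>W\<close> in the \<open>k\<close>-th
  level-\<open>n\<close> increment of \<open>\<Sum>m<n. \<alpha>^m W {b^m t}\<close>; \<open>cell m k i = 1\<close> iff the fine interval \<open>i\<close> lies in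
  the level-\<open>(n - m)\<close> interval \<open>k mod b^(n-m)\<close>.\<close>
locale critical_coefs =
  fixes \<alpha> :: real and b :: nat and n :: nat
  assumes b_ge_2: "2 \<le> b" and alpha_pos: "0 < \<alpha>" and alpha_less_1: "\<alpha> < 1"
    and crit: "\<alpha>\<^sup>2 * real b = 1"
begin

definition cell :: "nat \<Rightarrow> nat \<Rightarrow> nat \<Rightarrow> real" where
  "cell m k i = (if i div b ^ m = k mod b ^ (n - m) then 1 else 0)"

definition coef :: "nat \<Rightarrow> nat \<Rightarrow> real" where
  "coef k i = (\<Sum>m<n. \<alpha> ^ m * cell m k i)"

definition overlap :: "nat \<Rightarrow> nat \<Rightarrow> nat \<Rightarrow> nat \<Rightarrow> real" where
  "overlap m m' k l = (\<Sum>i<b^n. cell m k i * cell m' l i)"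

definition gram :: "nat \<Rightarrow> nat \<Rightarrow> real" where
  "gram k l = (\<Sum>i<b^n. coef k i * coef l i)"

lemma b_pos: "0 < b" using b_ge_2 by simp

lemma b_power_split: "m \<le> n \<Longrightarrow> b ^ n = b ^ (n - m) * b ^ m"
  by (simp flip: power_add)

lemma critical_power: "\<alpha> ^ m * \<alpha> ^ m * real b ^ m = 1"
proof -
  have "\<alpha> ^ m * \<alpha> ^ m * real b ^ m = (\<alpha>\<^sup>2 * real b) ^ m"
    by (simp add: power_mult_distrib power2_eq_square)
  then show ?thesis using crit by simp
qed

lemma sum_cell_fine: "m \<le> n \<Longrightarrow> (\<Sum>i<b^n. cell m k i) = real b ^ m"
  using sum_indicator_div_eq[of "k mod b ^ (n - m)" "b ^ (n - m)" "b ^ m"] b_pos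
  by (simp add: cell_def b_power_split)

lemma sum_cell_positions:
  assumes "m \<le> n" "i < b ^ n"
  shows "(\<Sum>k<b^n. cell m k i) = real b ^ m"
proof -
  have "i div b ^ m < b ^ (n - m)"
    using assms b_power_split[OF assms(1)] by (simp add: less_mult_imp_div_less)
  then show ?thesis
    using sum_indicator_mod_eq[of "i div b ^ m" "b ^ (n - m)" "b ^ m"] b_power_split[OF assms(1)]
    by (simp add: cell_def eq_commute mult.commute)
qed

lemma overlap_nonneg: "0 \<le> overlap m m' k l"
  unfolding overlap_def by (intro sum_nonneg) (simp add: cell_def)

lemma overlap_commute: "overlap m m' k l = overlap m' m l k"
  unfolding overlap_def by (simp add: mult.commute)

lemma overlap_le: "m \<le> n \<Longrightarrow> m' \<le> n \<Longrightarrow> overlap m m' k l \<le> real b ^ min m m'"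
proof -
  assume "m \<le> n" "m' \<le> n"
  have "overlap m m' k l \<le> (\<Sum>i<b^n. cell m k i)" "overlap m m' k l \<le> (\<Sum>i<b^n. cell m' l i)"
    unfolding overlap_def by (intro sum_mono; simp add: cell_def)+
  then show ?thesis using \<open>m \<le> n\<close> \<open>m' \<le> n\<close> by (simp add: sum_cell_fine min_def)
qed

lemma cell_idem: "cell m k i * cell m k i = cell m k i"
  by (simp add: cell_def)

lemma overlap_diag: "m \<le> n \<Longrightarrow> overlap m m k k = real b ^ m"
  unfolding overlap_def using sum_cell_fine by (simp add: cell_idem)

lemma sum_overlap:
  assumes "m \<le> n" "m' \<le> n"
  shows "(\<Sum>k<b^n. \<Sum>l<b^n. overlap m m' k l) = real b ^ n * real b ^ m * real b ^ m'"
proof -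
  have "(\<Sum>k<b^n. \<Sum>l<b^n. overlap m m' k l) = (\<Sum>i<b^n. (\<Sum>k<b^n. cell m k i) * (\<Sum>l<b^n. cell m' l i))"
    unfolding overlap_def sum_product
    by (subst sum.swap, rule sum.cong[OF refl], subst sum.swap, simp)
  also have "\<dots> = (\<Sum>i<b^n. real b ^ m * real b ^ m')"
    by (intro sum.cong refl) (simp add: sum_cell_positions assms)
  finally show ?thesis by simp
qed

text \<open>The overlaps on the diagonal \<open>k = l\<close> are counted by numbers whose \<open>b\<close>-adic digits repeat
  with period \<open>m - m'\<close>.\<close>
lemma sum_overlap_diag_offdiag_le:
  assumes "m' < m" "m < n"
  shows "(\<Sum>k<b^n. overlap m m' k k) \<le> real b ^ m * real b ^ m'"
proof -
  define d where "d = m - m'"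
  define P where "P R \<longleftrightarrow> R div b ^ d = R mod b ^ (n - m)" for R
  have d: "1 \<le> d" using assms by (simp add: d_def)
  have bm: "b ^ m = b ^ m' * b ^ d" using assms by (simp add: d_def flip: power_add)
  have dvd: "b ^ (n - m) dvd b ^ (n - m')" using assms by (intro le_imp_power_dvd) simp
  have cell_mult: "cell m k i * cell m' k i = (if P (i div b ^ m') then 1 else 0) * cell m' k i" for k i
  proof (cases "i div b ^ m' = k mod b ^ (n - m')")
    case True
    have "k mod b ^ (n - m) = (k mod b ^ (n - m')) mod b ^ (n - m)"
      using dvd by (simp add: mod_mod_cancel)
    moreover have "i div b ^ m = (i div b ^ m') div b ^ d"
      by (simp add: bm div_mult2_eq)
    ultimately show ?thesis using True by (simp add: cell_def P_def)
  qed (simp add: cell_def)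
  have "(\<Sum>k<b^n. overlap m m' k k) = (\<Sum>i<b^n. \<Sum>k<b^n. cell m k i * cell m' k i)"
    unfolding overlap_def by (rule sum.swap)
  also have "\<dots> = (\<Sum>i<b^n. (if P (i div b ^ m') then 1 else 0) * real b ^ m')"
    using assms by (intro sum.cong refl)
      (simp add: cell_mult sum_distrib_left[symmetric] sum_cell_positions)
  also have "\<dots> = (\<Sum>R<b ^ (n - m'). \<Sum>s<b ^ m'. (if P ((R * b ^ m' + s) div b ^ m') then 1 else 0) * real b ^ m')"
    using sum_lessThan_mult_nested[of "\<lambda>i. (if P (i div b ^ m') then 1 else 0) * real b ^ m'" "b ^ (n - m')" "b ^ m'"]
      b_power_split[of m'] assms by simp
  also have "\<dots> = (\<Sum>R<b ^ (n - m'). of_bool (P R)) * (real b ^ m' * real b ^ m')"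
    using b_pos by (simp add: sum_distrib_left sum_distrib_right of_bool_def mult_ac)
  also have "(\<Sum>R<b ^ (n - m'). of_bool (P R)) = real (card ({..<b ^ (n - m')} \<inter> {R. P R}))"
    by simp
  also have "{..<b ^ (n - m')} \<inter> {R. P R} = {R. R < b ^ ((n - m) + d) \<and> R div b ^ d = R mod b ^ (n - m)}"
    using assms by (auto simp: P_def d_def)
  also have "real (card \<dots>) \<le> real (b ^ d)"
    using card_mod_digits_repeat_le[OF b_ge_2 d, of "n - m"] by linarith
  finally show ?thesis
    using bm by (simp add: mult_right_mono mult_ac flip: of_nat_power of_nat_mult)
qed

lemma gram_eq_sum_overlap: "gram k l = (\<Sum>m<n. \<Sum>m'<n. \<alpha> ^ m * \<alpha> ^ m' * overlap m m' k l)"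
proof -
  have "gram k l = (\<Sum>i<b^n. \<Sum>m<n. \<Sum>m'<n. \<alpha> ^ m * \<alpha> ^ m' * (cell m k i * cell m' l i))"
    unfolding gram_def coef_def sum_product by (simp add: algebra_simps)
  also have "\<dots> = (\<Sum>m<n. \<Sum>m'<n. \<Sum>i<b^n. \<alpha> ^ m * \<alpha> ^ m' * (cell m k i * cell m' l i))"
    by (subst sum.swap, rule sum.cong[OF refl], subst sum.swap, simp)
  finally show ?thesis
    unfolding overlap_def by (simp add: sum_distrib_left)
qed

lemma gram_diag_ge: "real n \<le> gram k k"
proof -
  have "real n = (\<Sum>m<n. \<alpha> ^ m * \<alpha> ^ m * overlap m m k k)"
    using overlap_diag critical_power by simp
  also have "\<dots> \<le> (\<Sum>m<n. \<Sum>m'<n. \<alpha> ^ m * \<alpha> ^ m' * overlap m m' k k)"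
    using alpha_pos overlap_nonneg
    by (intro sum_mono member_le_sum[of _ "{..<n}" "\<lambda>m'. \<alpha> ^ _ * \<alpha> ^ m' * overlap _ m' k k", simplified])
      auto
  finally show ?thesis by (simp add: gram_eq_sum_overlap)
qed

lemma gram_diag_le: "gram k k \<le> real n ^ 2"
proof -
  have "gram k k = (\<Sum>i<b^n. (\<Sum>m<n. 1 * (\<alpha> ^ m * cell m k i))\<^sup>2)"
    by (simp add: gram_def coef_def power2_eq_square)
  also have "\<dots> \<le> (\<Sum>i<b^n. (\<Sum>m<n. 1\<^sup>2) * (\<Sum>m<n. (\<alpha> ^ m * cell m k i)\<^sup>2))"
    by (intro sum_mono Cauchy_Schwarz_ineq_sum)
  also have "\<dots> = (\<Sum>i<b^n. real n * (\<Sum>m<n. \<alpha> ^ m * \<alpha> ^ m * cell m k i))"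
    by (simp add: power2_eq_square cell_idem mult_ac)
  also have "\<dots> = real n * (\<Sum>m<n. \<alpha> ^ m * \<alpha> ^ m * (\<Sum>i<b^n. cell m k i))"
    by (simp add: sum_distrib_left sum.swap[of _ "{..<b^n}" "{..<n}"])
  also have "\<dots> = real n * real n"
    using sum_cell_fine critical_power by simp
  finally show ?thesis by (simp add: power2_eq_square)
qed


lemma weighted_sum_overlap_diag_le:
  assumes "m < n" "m' < n"
  shows "\<alpha> ^ m * \<alpha> ^ m' * (\<Sum>k<b^n. overlap m m' k k)
           \<le> (if m = m' then real b ^ n else 0) + (\<alpha> ^ m * real b ^ m) * (\<alpha> ^ m' * real b ^ m')"
proof (cases "m = m'")
  case True
  then have "\<alpha> ^ m * \<alpha> ^ m' * (\<Sum>k<b^n. overlap m m' k k) = real b ^ n"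
    using assms critical_power[of m] by (simp add: overlap_diag algebra_simps)
  then show ?thesis using True alpha_pos by simp
next
  case False
  have "(\<Sum>k<b^n. overlap m m' k k) \<le> real b ^ m * real b ^ m'"
  proof (cases "m' < m")
    case True
    then show ?thesis using sum_overlap_diag_offdiag_le[of m' m] assms by simp
  next
    case False
    then have "(\<Sum>k<b^n. overlap m' m k k) \<le> real b ^ m' * real b ^ m"
      using sum_overlap_diag_offdiag_le[of m m'] assms \<open>m \<noteq> m'\<close> by simp
    then show ?thesis by (simp add: overlap_commute[of m m'] mult.commute)
  qed
  then have "\<alpha> ^ m * \<alpha> ^ m' * (\<Sum>k<b^n. overlap m m' k k) \<le> \<alpha> ^ m * \<alpha> ^ m' * (real b ^ m * real b ^ m')"
    using alpha_pos by (intro mult_left_mono) auto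
  then show ?thesis using False by (simp add: algebra_simps)
qed

lemma sum_weights_sq_le: "(\<Sum>m<n. \<alpha> ^ m * real b ^ m)\<^sup>2 \<le> real b ^ n * (1 / (1 - \<alpha>))\<^sup>2"
proof -
  have "\<alpha> ^ n * (\<Sum>m<n. \<alpha> ^ m * real b ^ m) = (\<Sum>m<n. \<alpha> ^ (n - m))"
  proof (intro sum_distrib_left[THEN trans] sum.cong refl)
    fix m assume "m \<in> {..<n}"
    then have "\<alpha> ^ n = \<alpha> ^ (n - m) * \<alpha> ^ m" by (simp flip: power_add)
    then show "\<alpha> ^ n * (\<alpha> ^ m * real b ^ m) = \<alpha> ^ (n - m)"
      using critical_power[of m] by (simp add: algebra_simps)
  qed
  then have "\<alpha> ^ n * (\<Sum>m<n. \<alpha> ^ m * real b ^ m) \<le> 1 / (1 - \<alpha>)"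
    using sum_power_diff_le[of \<alpha> n] alpha_pos alpha_less_1 by simp
  moreover have "0 \<le> \<alpha> ^ n * (\<Sum>m<n. \<alpha> ^ m * real b ^ m)"
    using alpha_pos by (intro mult_nonneg_nonneg sum_nonneg) auto
  moreover have "(\<Sum>m<n. \<alpha> ^ m * real b ^ m)\<^sup>2 = real b ^ n * (\<alpha> ^ n * (\<Sum>m<n. \<alpha> ^ m * real b ^ m))\<^sup>2"
    using critical_power[of n] by (simp add: power2_eq_square algebra_simps)
  ultimately show ?thesis
    by (simp add: mult_left_mono power_mono)
qed

lemma sum_gram_diag_le: "(\<Sum>k<b^n. gram k k) \<le> real b ^ n * (real n + (1 / (1 - \<alpha>))\<^sup>2)"
proof -
  have "(\<Sum>k<b^n. gram k k) = (\<Sum>m<n. \<Sum>m'<n. \<alpha> ^ m * \<alpha> ^ m' * (\<Sum>k<b^n. overlap m m' k k))"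
    unfolding gram_eq_sum_overlap
    by (subst sum.swap, rule sum.cong[OF refl], subst sum.swap, simp add: sum_distrib_left)
  also have "\<dots> \<le> (\<Sum>m<n. \<Sum>m'<n. (if m = m' then real b ^ n else 0)
                                    + (\<alpha> ^ m * real b ^ m) * (\<alpha> ^ m' * real b ^ m'))"
    by (intro sum_mono weighted_sum_overlap_diag_le) auto
  also have "\<dots> = real n * real b ^ n + (\<Sum>m<n. \<alpha> ^ m * real b ^ m)\<^sup>2"
    by (simp add: sum.distrib power2_eq_square sum_product)
  finally show ?thesis
    using sum_weights_sq_le by (simp add: algebra_simps)
qed

lemma b_power_le_weighted:
  assumes "p \<le> q" "q < n"
  shows "real b ^ p \<le> real b ^ n * (\<alpha> ^ (n - p) * \<alpha> ^ (n - q))"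
proof -
  have "\<alpha> ^ (n - p) \<le> \<alpha> ^ (n - q)"
    using assms alpha_pos alpha_less_1 by (intro power_decreasing) auto
  then have "\<alpha> ^ (n - p) * \<alpha> ^ (n - p) \<le> \<alpha> ^ (n - p) * \<alpha> ^ (n - q)"
    using alpha_pos by (intro mult_left_mono) auto
  moreover have "real b ^ n * (\<alpha> ^ (n - p) * \<alpha> ^ (n - p)) = real b ^ p"
  proof -
    have "real b ^ n = real b ^ (n - p) * real b ^ p" using assms by (simp flip: power_add)
    then show ?thesis using critical_power[of "n - p"] by (simp add: algebra_simps)
  qed
  ultimately show ?thesis
    by (metis mult_left_mono of_nat_0_le_iff zero_le_power)
qed

lemma sum_sq_overlap_term_le:
  assumes "m < n" "m' < n"
  shows "(\<Sum>k<b^n. \<Sum>l<b^n. (\<alpha> ^ m * \<alpha> ^ m' * overlap m m' k l)\<^sup>2)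
           \<le> real b ^ n * real b ^ n * (\<alpha> ^ (n - m) * \<alpha> ^ (n - m'))"
proof -
  have "(\<Sum>k<b^n. \<Sum>l<b^n. (\<alpha> ^ m * \<alpha> ^ m' * overlap m m' k l)\<^sup>2) \<le>
        (\<Sum>k<b^n. \<Sum>l<b^n. (\<alpha> ^ m * \<alpha> ^ m')\<^sup>2 * real b ^ min m m' * overlap m m' k l)"
  proof (intro sum_mono)
    fix k l
    have "overlap m m' k l * overlap m m' k l \<le> real b ^ min m m' * overlap m m' k l"
      using overlap_le[of m m' k l] assms overlap_nonneg[of m m' k l] by (intro mult_right_mono) auto
    then have "(\<alpha> ^ m * \<alpha> ^ m')\<^sup>2 * (overlap m m' k l * overlap m m' k l)
                \<le> (\<alpha> ^ m * \<alpha> ^ m')\<^sup>2 * (real b ^ min m m' * overlap m m' k l)"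
      by (intro mult_left_mono) auto
    then show "(\<alpha> ^ m * \<alpha> ^ m' * overlap m m' k l)\<^sup>2 \<le> (\<alpha> ^ m * \<alpha> ^ m')\<^sup>2 * real b ^ min m m' * overlap m m' k l"
      by (simp add: power2_eq_square mult_ac)
  qed
  also have "\<dots> = (\<alpha> ^ m * \<alpha> ^ m')\<^sup>2 * real b ^ min m m' * (\<Sum>k<b^n. \<Sum>l<b^n. overlap m m' k l)"
    by (simp add: sum_distrib_left)
  also have "\<dots> = (\<alpha> ^ m * \<alpha> ^ m')\<^sup>2 * real b ^ min m m' * (real b ^ n * real b ^ m * real b ^ m')"
    using sum_overlap[of m m'] assms by simp
  also have "\<dots> = (\<alpha> ^ m * \<alpha> ^ m * real b ^ m) * (\<alpha> ^ m' * \<alpha> ^ m' * real b ^ m')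
                    * (real b ^ n * real b ^ min m m')"
    by (simp add: power2_eq_square algebra_simps)
  also have "\<dots> = real b ^ n * real b ^ min m m'"
    by (simp add: critical_power)
  also have "\<dots> \<le> real b ^ n * (real b ^ n * (\<alpha> ^ (n - m) * \<alpha> ^ (n - m')))"
  proof (intro mult_left_mono)
    show "real b ^ min m m' \<le> real b ^ n * (\<alpha> ^ (n - m) * \<alpha> ^ (n - m'))"
      using b_power_le_weighted[of m m'] b_power_le_weighted[of m' m] assms
      by (cases "m \<le> m'") (auto simp: min_def mult.commute)
  qed simp
  finally show ?thesis by (simp add: mult.assoc)
qed

text \<open>The weights \<open>\<surd>\<alpha>^(n-m) \<surd>\<alpha>^(n-m')\<close> in Cauchy--Schwarz balance the bound
  \<open>\<alpha>^(n-m) \<alpha>^(n-m')\<close> on the single terms.\<close>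
lemma sum_sq_gram_le:
  "(\<Sum>k<b^n. \<Sum>l<b^n. (gram k l)\<^sup>2) \<le> real b ^ n * real b ^ n * (1 / (1 - sqrt \<alpha>))^4"
proof -
  define \<rho> where "\<rho> = sqrt \<alpha>"
  have \<rho>: "0 < \<rho>" "\<rho> < 1" "\<rho>\<^sup>2 = \<alpha>"
    using alpha_pos alpha_less_1 by (auto simp: \<rho>_def)
  define P where "P = {..<n} \<times> {..<n}"
  define w where "w p = \<rho> ^ (n - fst p) * \<rho> ^ (n - snd p)" for p
  define x where "x p k l = \<alpha> ^ fst p * \<alpha> ^ snd p * overlap (fst p) (snd p) k l" for p k l
  define S where "S = (\<Sum>p\<in>P. w p)"
  have w_pos: "0 < w p" for p using \<rho> by (simp add: w_def)
  have gram_P: "gram k l = (\<Sum>p\<in>P. x p k l)" for k l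
    unfolding gram_eq_sum_overlap P_def x_def by (simp add: sum.cartesian_product case_prod_beta)
  have S_eq: "S = (\<Sum>m<n. \<rho> ^ (n - m))\<^sup>2"
    unfolding S_def P_def w_def
    by (simp add: power2_eq_square sum_product sum.cartesian_product case_prod_beta)
  have S_nonneg: "0 \<le> S" unfolding S_eq by simp
  have S_le: "S \<le> (1 / (1 - \<rho>))\<^sup>2"
    unfolding S_eq using sum_power_diff_le[of \<rho> n] \<rho>
    by (intro power_mono) (auto intro!: sum_nonneg)
  have x_bound: "(\<Sum>k<b^n. \<Sum>l<b^n. (x p k l)\<^sup>2) / w p \<le> real b ^ n * real b ^ n * w p" if "p \<in> P" for p
  proof -
    obtain m m' where p: "p = (m, m')" "m < n" "m' < n" using \<open>p \<in> P\<close> by (auto simp: P_def)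
    have "w p * w p = \<alpha> ^ (n - m) * \<alpha> ^ (n - m')"
      using \<rho>(3) by (simp add: w_def p power2_eq_square algebra_simps flip: power_mult_distrib)
    then have "(\<Sum>k<b^n. \<Sum>l<b^n. (x p k l)\<^sup>2) \<le> real b ^ n * real b ^ n * (w p * w p)"
      using sum_sq_overlap_term_le[OF p(2,3)] by (simp add: x_def p)
    then show ?thesis
      using w_pos[of p] by (simp add: divide_le_eq algebra_simps)
  qed
  have "(\<Sum>k<b^n. \<Sum>l<b^n. (gram k l)\<^sup>2) \<le> (\<Sum>k<b^n. \<Sum>l<b^n. S * (\<Sum>p\<in>P. (x p k l)\<^sup>2 / w p))"
    unfolding gram_P S_def by (intro sum_mono Cauchy_Schwarz_weighted_sum w_pos)
  also have "\<dots> = S * (\<Sum>p\<in>P. (\<Sum>k<b^n. \<Sum>l<b^n. (x p k l)\<^sup>2) / w p)"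
    by (simp add: sum_distrib_left sum_divide_distrib sum.swap[of _ P])
  also have "\<dots> \<le> S * (\<Sum>p\<in>P. real b ^ n * real b ^ n * w p)"
    by (intro mult_left_mono S_nonneg sum_mono x_bound)
  also have "\<dots> = real b ^ n * real b ^ n * S * S"
    by (simp add: S_def sum_distrib_left[symmetric] sum_distrib_right[symmetric] algebra_simps)
  also have "\<dots> \<le> real b ^ n * real b ^ n * (1 / (1 - \<rho>))\<^sup>2 * (1 / (1 - \<rho>))\<^sup>2"
    using S_le S_nonneg by (intro mult_mono) auto
  also have "\<dots> = real b ^ n * real b ^ n * (1 / (1 - sqrt \<alpha>))^4"
    by (simp add: \<rho>_def mult.assoc flip: power_add)
  finally show ?thesis .
qed

end

lemma (in prob_space) AE_summable_of_summable_expectation: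
  fixes f :: "nat \<Rightarrow> 'a \<Rightarrow> real"
  assumes meas: "\<And>n. f n \<in> borel_measurable M" and nonneg: "\<And>n \<omega>. 0 \<le> f n \<omega>"
    and int: "\<And>n. integrable M (f n)" and summable: "summable (\<lambda>n. expectation (f n))"
  shows "AE \<omega> in M. summable (\<lambda>n. f n \<omega>)"
proof -
  have "(\<integral>\<^sup>+\<omega>. (\<Sum>n. ennreal (f n \<omega>)) \<partial>M) = (\<Sum>n. \<integral>\<^sup>+\<omega>. ennreal (f n \<omega>) \<partial>M)"
    by (rule nn_integral_suminf) (use meas in auto)
  also have "\<dots> = (\<Sum>n. ennreal (expectation (f n)))"
    by (intro suminf_cong nn_integral_eq_integral int) (auto simp: nonneg)
  also have "\<dots> = ennreal (\<Sum>n. expectation (f n))"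
    by (rule suminf_ennreal2[OF _ summable]) (auto intro!: integral_nonneg_AE simp: nonneg)
  finally have finite: "(\<integral>\<^sup>+\<omega>. (\<Sum>n. ennreal (f n \<omega>)) \<partial>M) \<noteq> \<infinity>" by simp
  have "AE \<omega> in M. (\<Sum>n. ennreal (f n \<omega>)) \<noteq> \<infinity>"
    by (rule nn_integral_PInf_AE[OF _ finite]) (use meas in auto)
  then show ?thesis
    by eventually_elim (rule summable_suminf_not_top[OF nonneg], simp)
qed

lemma summable_pow4_mult_geometric:
  fixes \<theta> :: real assumes "0 \<le> \<theta>" "\<theta> < 1"
  shows "summable (\<lambda>n. real n ^ 4 * \<theta> ^ n)"
proof -
  define r where "r = sqrt \<theta>"
  define s where "s = sqrt (sqrt r)"
  have r: "0 \<le> r" "r < 1" "r * r = \<theta>" using assms by (auto simp: r_def)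
  have s4: "s ^ 4 = r"
  proof -
    have "s ^ 4 = (sqrt (sqrt r) ^ 2) ^ 2" by (simp add: s_def flip: power_mult)
    also have "\<dots> = r" using r by simp
    finally show ?thesis .
  qed
  have s: "0 \<le> s" "s < 1" "s ^ 4 = r" using r s4 by (auto simp: s_def)
  have "(\<lambda>n. real n * s ^ n) \<longlonglongrightarrow> 0"
    using powser_times_n_limit_0[of s] s by simp
  then have "(\<lambda>n. (real n * s ^ n) ^ 4) \<longlonglongrightarrow> 0 ^ 4"
    by (intro tendsto_power)
  moreover have "(real n * s ^ n) ^ 4 = real n ^ 4 * r ^ n" for n
    using s by (simp add: power_mult_distrib power_mult[symmetric] mult.commute[of n 4] power_mult)
  ultimately have lim: "(\<lambda>n. real n ^ 4 * r ^ n) \<longlonglongrightarrow> 0" by simp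
  then have ev: "eventually (\<lambda>n. real n ^ 4 * r ^ n < 1) sequentially"
    by (rule order_tendstoD) simp
  have "summable (\<lambda>n. r ^ n)" using r by (intro summable_geometric) simp
  moreover have "eventually (\<lambda>n. norm (real n ^ 4 * \<theta> ^ n) \<le> r ^ n) sequentially"
    using ev
  proof eventually_elim
    case (elim n)
    have "real n ^ 4 * \<theta> ^ n = (real n ^ 4 * r ^ n) * r ^ n"
      using r by (simp add: power_mult_distrib[symmetric])
    also have "\<dots> \<le> 1 * r ^ n"
      using elim r by (intro mult_right_mono) auto
    finally show ?case using assms by simp
  qed
  ultimately show ?thesis
    by (rule summable_comparison_test_ev[rotated])
qed

lemma (in prob_space) AE_tendsto_over_n_of_bounded_second_moment:
  fixes Y :: "nat \<Rightarrow> 'a \<Rightarrow> real"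
  assumes meas: "\<And>n. Y n \<in> borel_measurable M"
    and int: "\<And>n. integrable M (\<lambda>\<omega>. (Y n \<omega>)\<^sup>2)"
    and bounded: "\<And>n. expectation (\<lambda>\<omega>. (Y n \<omega>)\<^sup>2) \<le> C"
  shows "AE \<omega> in M. (\<lambda>n. Y n \<omega> / real n) \<longlonglongrightarrow> 0"
proof -
  define f where "f n \<omega> = (Y n \<omega>)\<^sup>2 / (real n)\<^sup>2" for n \<omega>
  have f_meas: "f n \<in> borel_measurable M" for n unfolding f_def[abs_def] using meas by measurable
  have f_int: "integrable M (f n)" for n unfolding f_def[abs_def] using int by simp
  have f_summable: "summable (\<lambda>n. expectation (f n))"
  proof (rule summable_comparison_test')
    show "summable (\<lambda>n. C * inverse (real n ^ 2))"
      by (intro summable_mult inverse_power_summable) simp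
    show "norm (expectation (f n)) \<le> C * inverse (real n ^ 2)" for n
      unfolding f_def using bounded[of n] integral_nonneg_AE[of "\<lambda>\<omega>. (Y n \<omega>)\<^sup>2" M]
      by (simp add: divide_right_mono field_simps)
  qed
  have "AE \<omega> in M. summable (\<lambda>n. f n \<omega>)"
    by (rule AE_summable_of_summable_expectation[OF f_meas _ f_int f_summable]) (simp add: f_def)
  then show ?thesis
  proof eventually_elim
    case (elim \<omega>)
    have "(\<lambda>n. sqrt (f n \<omega>)) \<longlonglongrightarrow> sqrt 0"
      using elim by (intro tendsto_real_sqrt summable_LIMSEQ_zero)
    moreover have "sqrt (f n \<omega>) = \<bar>Y n \<omega> / real n\<bar>" for n
      unfolding f_def by (simp add: real_sqrt_divide power_divide[symmetric])
    ultimately have "(\<lambda>n. \<bar>Y n \<omega> / real n\<bar>) \<longlonglongrightarrow> 0" by simp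
    then show ?case by (rule tendsto_rabs_zero_cancel)
  qed
qed

lemma tendsto_over_n_of_sqrt_close:
  fixes x y :: "nat \<Rightarrow> real"
  assumes nonneg: "\<And>n. 0 \<le> x n" and close: "\<And>n. \<bar>sqrt (x n) - sqrt (y n)\<bar> \<le> E"
    and lim: "(\<lambda>n. y n / real n) \<longlonglongrightarrow> t" and t: "0 \<le> t"
  shows "(\<lambda>n. x n / real n) \<longlonglongrightarrow> t"
proof -
  have close_n: "\<bar>sqrt (x n / real n) - sqrt (y n / real n)\<bar> \<le> E * (1 / sqrt (real n))" for n
  proof (cases "n = 0")
    case False
    have "sqrt (x n / real n) - sqrt (y n / real n) = (sqrt (x n) - sqrt (y n)) / sqrt (real n)"
      by (simp add: real_sqrt_divide diff_divide_distrib)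
    then show ?thesis using close[of n] False
      by (simp add: abs_div divide_right_mono)
  qed simp
  have "(\<lambda>n. sqrt (1 / real n)) \<longlonglongrightarrow> sqrt 0" by (intro tendsto_real_sqrt lim_const_over_n)
  then have "(\<lambda>n. E * (1 / sqrt (real n))) \<longlonglongrightarrow> E * 0"
    by (intro tendsto_mult tendsto_const) (simp add: real_sqrt_divide)
  then have bound_lim: "(\<lambda>n. E * (1 / sqrt (real n))) \<longlonglongrightarrow> 0" by simp
  have "(\<lambda>n. \<bar>sqrt (x n / real n) - sqrt (y n / real n)\<bar>) \<longlonglongrightarrow> 0"
    by (rule tendsto_sandwich[OF _ _ tendsto_const bound_lim]) (use close_n in auto)
  then have "(\<lambda>n. sqrt (x n / real n) - sqrt (y n / real n)) \<longlonglongrightarrow> 0"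
    by (rule tendsto_rabs_zero_cancel)
  then have "(\<lambda>n. (sqrt (x n / real n) - sqrt (y n / real n)) + sqrt (y n / real n)) \<longlonglongrightarrow> 0 + sqrt t"
    by (intro tendsto_add tendsto_real_sqrt lim)
  then have "(\<lambda>n. (sqrt (x n / real n))\<^sup>2) \<longlonglongrightarrow> (sqrt t)\<^sup>2"
    by (intro tendsto_power) simp
  moreover have "(sqrt (x n / real n))\<^sup>2 = x n / real n" for n
    using nonneg[of n] by simp
  ultimately show ?thesis using t by simp
qed

lemma tendsto_of_monotone_rationals:
  fixes g :: "real \<Rightarrow> nat \<Rightarrow> real"
  assumes mono: "\<And>s t n. 0 \<le> s \<Longrightarrow> s \<le> t \<Longrightarrow> t \<le> 1 \<Longrightarrow> g s n \<le> g t n"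
    and lim: "\<forall>q\<in>\<rat> \<inter> {0..1}. (\<lambda>n. g q n / real n) \<longlonglongrightarrow> q"
    and t: "0 < t" "t \<le> 1"
  shows "(\<lambda>n. g t n / real n) \<longlonglongrightarrow> t"
proof (rule order_tendstoI)
  fix a assume "a < t"
  then obtain q where q: "q \<in> \<rat>" "max a 0 < q" "q < t"
    using Rats_dense_in_real[of "max a 0" t] t by auto
  then have "eventually (\<lambda>n. a < g q n / real n) sequentially"
    using lim t by (intro order_tendstoD(1)) auto
  then show "eventually (\<lambda>n. a < g t n / real n) sequentially"
  proof eventually_elim
    case (elim n)
    have "g q n / real n \<le> g t n / real n"
      using mono[of q t n] q t by (intro divide_right_mono) auto
    then show ?case using elim by simp
  qed
next
  fix a assume "t < a"
  obtain q where q: "q \<in> \<rat> \<inter> {0..1}" "t \<le> q" "q < a"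
  proof (cases "t < 1")
    case True
    obtain q where "q \<in> \<rat>" "t < q" "q < min a 1"
      using Rats_dense_in_real[of t "min a 1"] \<open>t < a\<close> True by auto
    then show ?thesis using that[of q] t by auto
  next
    case False
    then show ?thesis using that[of 1] \<open>t < a\<close> t by auto
  qed
  then have "eventually (\<lambda>n. g q n / real n < a) sequentially"
    using lim by (intro order_tendstoD(2)) auto
  then show "eventually (\<lambda>n. g t n / real n < a) sequentially"
  proof eventually_elim
    case (elim n)
    have "g t n / real n \<le> g q n / real n"
      using mono[of t q n] q t by (intro divide_right_mono) auto
    then show ?case using elim by simp
  qed
qed

lemma sq_le_abs_powr:
  fixes x p :: real
  assumes "\<bar>x\<bar> \<le> 1" "0 < p" "p \<le> 2"
  shows "x\<^sup>2 \<le> \<bar>x\<bar> powr p"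
proof -
  have "\<bar>x\<bar> powr 2 \<le> \<bar>x\<bar> powr p"
    using assms by (intro powr_mono') auto
  then show ?thesis by simp
qed

lemma abs_powr_le_sq_mult:
  fixes x m p :: real
  assumes "\<bar>x\<bar> \<le> m" "2 < p"
  shows "\<bar>x\<bar> powr p \<le> x\<^sup>2 * m powr (p - 2)"
proof (cases "x = 0")
  case False
  have "\<bar>x\<bar> powr p = \<bar>x\<bar> powr (2 + (p - 2))" by simp
  also have "\<dots> = \<bar>x\<bar> powr 2 * \<bar>x\<bar> powr (p - 2)" by (rule powr_add)
  also have "\<dots> \<le> \<bar>x\<bar> powr 2 * m powr (p - 2)"
    using assms by (intro mult_left_mono powr_mono2) auto
  finally show ?thesis by simp
qed simp

lemma power_powr: "0 < (x::real) \<Longrightarrow> (x ^ n) powr r = (x powr r) ^ n"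
  by (simp add: powr_realpow[symmetric] powr_powr powr_power mult.commute)

lemma nat_floor_b_power: "nat \<lfloor>real b ^ n\<rfloor> = b ^ n"
  by (metis floor_of_nat nat_int of_nat_power)

lemma pvar_sum_1:
  "pvar_sum f b p 1 n = (\<Sum>k<b^n. \<bar>f ((real k + 1) / real b ^ n) - f (real k / real b ^ n)\<bar> powr p)"
  by (simp add: pvar_sum_def nat_floor_b_power)

lemma has_pvariation_infinity_of_qvar_linear:
  fixes f :: "real \<Rightarrow> real" and b :: nat and r C p :: real
  defines "D n k \<equiv> f ((real k + 1) / real b ^ n) - f (real k / real b ^ n)"
  assumes qvar: "(\<lambda>n. (\<Sum>k<b^n. (D n k)\<^sup>2) / real n) \<longlonglongrightarrow> 1"
    and small: "eventually (\<lambda>n. \<forall>k<b^n. \<bar>D n k\<bar> \<le> C * r ^ n) sequentially"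
    and r: "0 < r" "r < 1" and p: "0 < p" "p \<le> 2"
  shows "has_pvariation f b p 1 \<infinity>"
proof -
  have pvar: "pvar_sum f b p 1 n = (\<Sum>k<b^n. \<bar>D n k\<bar> powr p)" for n
    by (simp add: pvar_sum_1 D_def)
  have "(\<lambda>n. C * r ^ n) \<longlonglongrightarrow> C * 0"
    using r by (intro tendsto_mult tendsto_const LIMSEQ_power_zero) auto
  then have "eventually (\<lambda>n. C * r ^ n < 1) sequentially" by (intro order_tendstoD(2)) auto
  moreover have "eventually (\<lambda>n. 1/2 < (\<Sum>k<b^n. (D n k)\<^sup>2) / real n) sequentially"
    using qvar by (intro order_tendstoD(1)) auto
  ultimately have lower: "eventually (\<lambda>n. real n / 2 \<le> pvar_sum f b p 1 n) sequentially"
    using small eventually_gt_at_top[of "0::nat"]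
  proof eventually_elim
    case (elim n)
    have "real n / 2 \<le> (\<Sum>k<b^n. (D n k)\<^sup>2)" using elim by (simp add: field_simps)
    also have "\<dots> \<le> (\<Sum>k<b^n. \<bar>D n k\<bar> powr p)"
      using elim p by (intro sum_mono sq_le_abs_powr) force+
    finally show ?case by (simp add: pvar)
  qed
  show "has_pvariation f b p 1 \<infinity>"
    unfolding has_pvariation_def tendsto_PInfty
  proof
    fix x :: real
    have "eventually (\<lambda>n. x < real n / 2) sequentially"
      by (rule eventually_sequentiallyI[of "nat \<lceil>2 * x\<rceil> + 1"]) linarith
    then show "eventually (\<lambda>n. ereal x < ereal (pvar_sum f b p 1 n)) sequentially"
      using lower by eventually_elim simp
  qed
qed

lemma has_pvariation_zero_of_qvar_linear:
  fixes f :: "real \<Rightarrow> real" and b :: nat and r C p :: real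
  defines "D n k \<equiv> f ((real k + 1) / real b ^ n) - f (real k / real b ^ n)"
  assumes qvar: "(\<lambda>n. (\<Sum>k<b^n. (D n k)\<^sup>2) / real n) \<longlonglongrightarrow> 1"
    and small: "eventually (\<lambda>n. \<forall>k<b^n. \<bar>D n k\<bar> \<le> C * r ^ n) sequentially"
    and C: "0 < C" and r: "0 < r" "r < 1" and p: "2 < p"
  shows "has_pvariation f b p 1 0"
proof -
  have pvar: "pvar_sum f b p 1 n = (\<Sum>k<b^n. \<bar>D n k\<bar> powr p)" for n
    by (simp add: pvar_sum_1 D_def)
  define \<theta> where "\<theta> = r powr (p - 2)"
  have "r powr (p - 2) < 1 powr (p - 2)"
    using r p by (intro powr_less_mono2) auto
  then have \<theta>: "0 < \<theta>" "\<theta> < 1"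
    using r by (auto simp: \<theta>_def)
  have "eventually (\<lambda>n. (\<Sum>k<b^n. (D n k)\<^sup>2) / real n < 2) sequentially"
    using qvar by (intro order_tendstoD(2)) auto
  then have upper: "eventually (\<lambda>n. pvar_sum f b p 1 n \<le> 2 * C powr (p - 2) * (real n * \<theta> ^ n)) sequentially"
    using small eventually_gt_at_top[of "0::nat"]
  proof eventually_elim
    case (elim n)
    have "pvar_sum f b p 1 n \<le> (\<Sum>k<b^n. (D n k)\<^sup>2 * (C * r ^ n) powr (p - 2))"
      unfolding pvar using elim p by (intro sum_mono abs_powr_le_sq_mult) auto
    also have "\<dots> = (\<Sum>k<b^n. (D n k)\<^sup>2) * (C powr (p - 2) * \<theta> ^ n)"
      using C r by (simp add: sum_distrib_right powr_mult \<theta>_def power_powr)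
    also have "\<dots> \<le> (2 * real n) * (C powr (p - 2) * \<theta> ^ n)"
      using elim \<theta> by (intro mult_right_mono) (auto simp: field_simps)
    finally show ?case by (simp add: algebra_simps)
  qed
  have "(\<lambda>n. 2 * C powr (p - 2) * (real n * \<theta> ^ n)) \<longlonglongrightarrow> 2 * C powr (p - 2) * 0"
    using \<theta> by (intro tendsto_mult tendsto_const powser_times_n_limit_0) auto
  then have "(\<lambda>n. pvar_sum f b p 1 n) \<longlonglongrightarrow> 0"
    by (intro tendsto_sandwich[OF _ upper tendsto_const]) (auto simp: pvar sum_nonneg)
  then show "has_pvariation f b p 1 0"
    unfolding has_pvariation_def zero_ereal_def by (rule tendsto_ereal)
qed

section \<open>The critical Wiener--Weierstrass bridge\<close>

locale critical_ww_bridge =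
  fixes M :: "'a measure" and W :: "real \<Rightarrow> 'a \<Rightarrow> real" and \<kappa> :: "real \<Rightarrow> real"
    and \<tau> \<alpha> :: real and b :: nat
  assumes BM: "brownian_motion M W"
    and kappa0: "\<kappa> 0 = 0" and kappa1: "\<kappa> 1 = 1"
    and tau: "1/2 < \<tau>"
    and kappa_hoelder: "hoelder_on01 \<tau> \<kappa>"
    and alpha_pos: "0 < \<alpha>" and alpha_less_1: "\<alpha> < 1"
    and b_ge_2: "2 \<le> b"
    and crit: "\<alpha>\<^sup>2 * real b = 1"
begin

sublocale prob_space M using BM by (simp add: brownian_motion_def)

lemma W0: "\<omega> \<in> space M \<Longrightarrow> W 0 \<omega> = 0" using BM by (simp add: brownian_motion_def)

lemma b_pos: "0 < b" using b_ge_2 by simp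

lemma critical_coefs: "critical_coefs \<alpha> b"
  using b_ge_2 alpha_pos alpha_less_1 crit by unfold_locales

abbreviation coef :: "nat \<Rightarrow> nat \<Rightarrow> nat \<Rightarrow> real" where
  "coef n \<equiv> critical_coefs.coef \<alpha> b n"

abbreviation gram :: "nat \<Rightarrow> nat \<Rightarrow> nat \<Rightarrow> real" where
  "gram n \<equiv> critical_coefs.gram \<alpha> b n"

definition W_incr :: "nat \<Rightarrow> nat \<Rightarrow> 'a \<Rightarrow> real" where
  "W_incr n k \<omega> = weierstrass_increment (\<lambda>t. W t \<omega>) \<alpha> b n k"

definition kappa_incr :: "nat \<Rightarrow> nat \<Rightarrow> real" where
  "kappa_incr n k = weierstrass_increment \<kappa> \<alpha> b n k"

definition X_incr :: "nat \<Rightarrow> nat \<Rightarrow> 'a \<Rightarrow> real" where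
  "X_incr n k \<omega> = ww_bridge W \<kappa> \<alpha> b ((real k + 1) / real b ^ n) \<omega> - ww_bridge W \<kappa> \<alpha> b (real k / real b ^ n) \<omega>"

lemma X_incr_eq:
  assumes "\<omega> \<in> space M"
  shows "X_incr n k \<omega> = W_incr n k \<omega> - W 1 \<omega> * kappa_incr n k"
proof -
  have "X_incr n k \<omega> = weierstrass_increment (\<lambda>t. bridge W \<kappa> t \<omega>) \<alpha> b n k"
    unfolding X_incr_def ww_bridge_def using b_ge_2
    by (intro weierstrass_sum_grid_increment) (auto simp: bridge_def W0[OF assms] kappa0 kappa1)
  also have "\<dots> = W_incr n k \<omega> - W 1 \<omega> * kappa_incr n k"
    unfolding W_incr_def kappa_incr_def weierstrass_increment_def sum_distrib_left sum_subtractf[symmetric]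
    by (intro sum.cong refl) (simp add: bridge_def algebra_simps)
  finally show ?thesis .
qed

definition hoelder_const :: real where
  "hoelder_const = (SOME C. \<forall>s\<in>{0..1}. \<forall>t\<in>{0..1}. \<bar>\<kappa> s - \<kappa> t\<bar> \<le> C * \<bar>s - t\<bar> powr \<tau>)"

lemma hoelder_const: "\<forall>s\<in>{0..1}. \<forall>t\<in>{0..1}. \<bar>\<kappa> s - \<kappa> t\<bar> \<le> hoelder_const * \<bar>s - t\<bar> powr \<tau>"
  using kappa_hoelder unfolding hoelder_on01_def hoelder_const_def by (rule someI_ex)

definition kappa_const :: real where
  "kappa_const = hoelder_const / (1 - real b powr (1/2 - \<tau>))"

lemma kappa_const_nonneg: "0 \<le> kappa_const"
proof -
  have "1 \<le> hoelder_const"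
    using hoelder_const[rule_format, of 1 0] kappa0 kappa1 by simp
  moreover have "real b powr (1/2 - \<tau>) < 1"
    using b_ge_2 tau by (simp add: powr_less_one)
  ultimately show ?thesis by (simp add: kappa_const_def)
qed

lemma abs_kappa_incr_le: "\<bar>kappa_incr n k\<bar> \<le> kappa_const * \<alpha> ^ n"
proof -
  have "0 \<le> hoelder_const"
    using hoelder_const[rule_format, of 1 0] kappa0 kappa1 by simp
  then show ?thesis
    unfolding kappa_incr_def kappa_const_def
    using abs_weierstrass_increment_hoelder_le[OF hoelder_const] tau b_ge_2 alpha_pos crit by simp
qed

definition \<xi> :: "nat \<Rightarrow> nat \<Rightarrow> 'a \<Rightarrow> real" where
  "\<xi> n i \<omega> = W ((real i + 1) / real b ^ n) \<omega> - W (real i / real b ^ n) \<omega>"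

lemma gaussian_level: "gaussian_family M (\<xi> n) {..<b^n} (sqrt (1 / real b ^ n))"
  unfolding \<xi>_def[abs_def] using brownian_motion_grid_gaussian_family[OF BM b_pos] .

lemma W_incr_eq_lincomb: "W_incr n k \<omega> = gaussian_family.lincomb (\<xi> n) {..<b^n} (coef n k) \<omega>"
  unfolding W_incr_def weierstrass_increment_eq_sum_fine[OF b_pos]
    gaussian_family.lincomb_def[OF gaussian_level] critical_coefs.coef_def[OF critical_coefs]
    critical_coefs.cell_def[OF critical_coefs] \<xi>_def
  by simp

lemma sqnorm_coef: "gaussian_family.sqnorm {..<b^n} (coef n k) = gram n k k"
  unfolding gaussian_family.sqnorm_def[OF gaussian_level] critical_coefs.gram_def[OF critical_coefs]
  by (simp add: power2_eq_square)

lemma dot_coef: "gaussian_family.dot {..<b^n} (coef n k) (coef n l) = gram n k l"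
  unfolding gaussian_family.dot_def[OF gaussian_level] critical_coefs.gram_def[OF critical_coefs]
  by simp

lemma measurable_W_incr: "(\<lambda>\<omega>. W_incr n k \<omega>) \<in> borel_measurable M"
  unfolding W_incr_eq_lincomb using gaussian_family.measurable_lincomb[OF gaussian_level] by simp

definition grid_count :: "real \<Rightarrow> nat \<Rightarrow> nat" where
  "grid_count t n = nat \<lfloor>t * real b ^ n\<rfloor>"

definition W_qvar :: "real \<Rightarrow> nat \<Rightarrow> 'a \<Rightarrow> real" where
  "W_qvar t n \<omega> = (\<Sum>k<grid_count t n. (W_incr n k \<omega>)\<^sup>2)"

definition W_qvar_mean :: "real \<Rightarrow> nat \<Rightarrow> real" where
  "W_qvar_mean t n = (\<Sum>k<grid_count t n. gram n k k) / real b ^ n"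

definition X_qvar :: "real \<Rightarrow> nat \<Rightarrow> 'a \<Rightarrow> real" where
  "X_qvar t n \<omega> = (\<Sum>k<grid_count t n. (X_incr n k \<omega>)\<^sup>2)"

lemma grid_count_le: "t \<le> 1 \<Longrightarrow> grid_count t n \<le> b ^ n"
proof -
  assume "t \<le> 1"
  then have "0 \<le> (1 - t) * real b ^ n" by simp
  then have "t * real b ^ n \<le> real (b ^ n)" by (simp add: algebra_simps)
  then have "\<lfloor>t * real b ^ n\<rfloor> \<le> int (b ^ n)"
    by (metis floor_mono floor_of_nat of_int_of_nat_eq)
  then show ?thesis unfolding grid_count_def by (simp add: nat_le_iff)
qed

lemma grid_count_mono: "s \<le> t \<Longrightarrow> grid_count s n \<le> grid_count t n"
  unfolding grid_count_def by (intro nat_mono floor_mono mult_right_mono) auto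

lemma grid_count_bounds:
  assumes "0 \<le> t"
  shows "t * real b ^ n - 1 < real (grid_count t n)" "real (grid_count t n) \<le> t * real b ^ n"
proof -
  have "real (grid_count t n) = real_of_int \<lfloor>t * real b ^ n\<rfloor>"
    unfolding grid_count_def using assms by simp
  then show "t * real b ^ n - 1 < real (grid_count t n)" "real (grid_count t n) \<le> t * real b ^ n"
    by linarith+
qed

lemma grid_count_ratio_tendsto:
  assumes "0 \<le> t"
  shows "(\<lambda>n. real (grid_count t n) / real b ^ n) \<longlonglongrightarrow> t"
proof (rule tendsto_sandwich)
  have b_power_pos: "0 < real b ^ n" for n using b_pos by simp
  show "eventually (\<lambda>n. t - (1 / real b) ^ n \<le> real (grid_count t n) / real b ^ n) sequentially"
  proof (intro always_eventually allI)
    fix n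
    have "t - (1 / real b) ^ n = (t * real b ^ n - 1) / real b ^ n"
      using b_power_pos[of n] by (simp add: field_simps power_one_over)
    also have "\<dots> \<le> real (grid_count t n) / real b ^ n"
      using grid_count_bounds(1)[OF assms, of n] b_power_pos[of n] by (intro divide_right_mono) auto
    finally show "t - (1 / real b) ^ n \<le> real (grid_count t n) / real b ^ n" .
  qed
  show "eventually (\<lambda>n. real (grid_count t n) / real b ^ n \<le> t) sequentially"
    using grid_count_bounds(2)[OF assms] b_power_pos
    by (intro always_eventually allI) (simp add: field_simps)
  have "(\<lambda>n. (1 / real b) ^ n) \<longlonglongrightarrow> 0" using b_ge_2 by (intro LIMSEQ_power_zero) simp
  then show "(\<lambda>n. t - (1 / real b) ^ n) \<longlonglongrightarrow> t" using tendsto_diff[of "\<lambda>_. t" t] by fastforce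
qed simp

lemma W_qvar_variance:
  assumes t: "t \<le> 1"
  shows "integrable M (\<lambda>\<omega>. (W_qvar t n \<omega> - W_qvar_mean t n)\<^sup>2)"
    and "expectation (\<lambda>\<omega>. (W_qvar t n \<omega> - W_qvar_mean t n)\<^sup>2) \<le> 2 * (1 / (1 - sqrt \<alpha>)) ^ 4"
proof -
  let ?lin = "gaussian_family.lincomb (\<xi> n) {..<b^n}"
  let ?s = "sqrt (1 / real b ^ n)"
  let ?K = "{..<grid_count t n}"
  have "?s ^ 4 = (?s\<^sup>2)\<^sup>2" unfolding power_mult[symmetric] by simp
  then have s4: "?s ^ 4 = 1 / (real b ^ n * real b ^ n)"
    by (simp add: power2_eq_square)
  have W_qvar_lin: "W_qvar t n \<omega> = (\<Sum>k\<in>?K. (?lin (coef n k) \<omega>)\<^sup>2)" for \<omega>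
    unfolding W_qvar_def W_incr_eq_lincomb by simp
  have mean_lin: "W_qvar_mean t n = ?s\<^sup>2 * (\<Sum>k\<in>?K. gaussian_family.sqnorm {..<b^n} (coef n k))"
    unfolding W_qvar_mean_def sqnorm_coef by simp
  show "integrable M (\<lambda>\<omega>. (W_qvar t n \<omega> - W_qvar_mean t n)\<^sup>2)"
    unfolding W_qvar_lin mean_lin by (rule gaussian_family.sum_sq_lincomb_variance(1)[OF gaussian_level]) simp
  have "expectation (\<lambda>\<omega>. (W_qvar t n \<omega> - W_qvar_mean t n)\<^sup>2) =
          2 * ?s ^ 4 * (\<Sum>k\<in>?K. \<Sum>l\<in>?K. (gram n k l)\<^sup>2)"
    unfolding W_qvar_lin mean_lin dot_coef[symmetric]
    by (rule gaussian_family.sum_sq_lincomb_variance(2)[OF gaussian_level]) simp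
  also have "\<dots> \<le> 2 * ?s ^ 4 * (\<Sum>k<b^n. \<Sum>l<b^n. (gram n k l)\<^sup>2)"
    using grid_count_le[OF t]
    by (intro mult_left_mono order_trans[OF sum_mono[OF sum_mono2] sum_mono2] sum_nonneg) auto
  also have "\<dots> \<le> 2 * ?s ^ 4 * (real b ^ n * real b ^ n * (1 / (1 - sqrt \<alpha>)) ^ 4)"
    using critical_coefs.sum_sq_gram_le[OF critical_coefs, of n] by (intro mult_left_mono) auto
  also have "\<dots> = 2 * (1 / (1 - sqrt \<alpha>)) ^ 4"
    using b_pos by (simp add: s4)
  finally show "expectation (\<lambda>\<omega>. (W_qvar t n \<omega> - W_qvar_mean t n)\<^sup>2) \<le> 2 * (1 / (1 - sqrt \<alpha>)) ^ 4" .
qed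

lemma AE_W_qvar_deviation:
  assumes "t \<le> 1"
  shows "AE \<omega> in M. (\<lambda>n. (W_qvar t n \<omega> - W_qvar_mean t n) / real n) \<longlonglongrightarrow> 0"
proof (rule AE_tendsto_over_n_of_bounded_second_moment)
  show "(\<lambda>\<omega>. W_qvar t n \<omega> - W_qvar_mean t n) \<in> borel_measurable M" for n
    unfolding W_qvar_def using measurable_W_incr by measurable
qed (use W_qvar_variance[OF assms] in auto)

lemma W_qvar_mean_bounds:
  assumes t: "t \<le> 1"
  shows "real (grid_count t n) * real n / real b ^ n \<le> W_qvar_mean t n"
    and "W_qvar_mean t n \<le> real (grid_count t n) * real n / real b ^ n + (1 / (1 - \<alpha>))\<^sup>2"
proof -
  have b_power_pos: "0 < real b ^ n" using b_pos by simp
  have gram_ge: "real n \<le> gram n k k" for k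
    by (rule critical_coefs.gram_diag_ge[OF critical_coefs])
  have "real (grid_count t n) * real n \<le> (\<Sum>k<grid_count t n. gram n k k)"
    using sum_mono[of "{..<grid_count t n}" "\<lambda>_. real n" "\<lambda>k. gram n k k"] gram_ge by simp
  then show "real (grid_count t n) * real n / real b ^ n \<le> W_qvar_mean t n"
    unfolding W_qvar_mean_def using b_power_pos by (simp add: divide_right_mono)
  have "(\<Sum>k<grid_count t n. gram n k k) - real (grid_count t n) * real n
          = (\<Sum>k<grid_count t n. gram n k k - real n)"
    by (simp add: sum_subtractf)
  also have "\<dots> \<le> (\<Sum>k<b^n. gram n k k - real n)"
    using grid_count_le[OF t] gram_ge by (intro sum_mono2) auto
  also have "\<dots> = (\<Sum>k<b^n. gram n k k) - real b ^ n * real n"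
    by (simp add: sum_subtractf)
  also have "\<dots> \<le> real b ^ n * (1 / (1 - \<alpha>))\<^sup>2"
    using critical_coefs.sum_gram_diag_le[OF critical_coefs, of n] by (simp add: algebra_simps)
  finally show "W_qvar_mean t n \<le> real (grid_count t n) * real n / real b ^ n + (1 / (1 - \<alpha>))\<^sup>2"
    unfolding W_qvar_mean_def using b_power_pos by (simp add: field_simps)
qed

lemma W_qvar_mean_tendsto:
  assumes t: "0 \<le> t" "t \<le> 1"
  shows "(\<lambda>n. W_qvar_mean t n / real n) \<longlonglongrightarrow> t"
proof (rule tendsto_sandwich)
  define C where "C = (1 / (1 - \<alpha>))\<^sup>2"
  show "eventually (\<lambda>n. real (grid_count t n) / real b ^ n \<le> W_qvar_mean t n / real n) sequentially"
    using eventually_gt_at_top[of "0::nat"]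
    by eventually_elim (use W_qvar_mean_bounds(1)[OF t(2)] in \<open>simp add: field_simps\<close>)
  show "eventually (\<lambda>n. W_qvar_mean t n / real n \<le> real (grid_count t n) / real b ^ n + C * (1 / real n))
          sequentially"
    using eventually_gt_at_top[of "0::nat"]
    by eventually_elim (use W_qvar_mean_bounds(2)[OF t(2)] in \<open>simp add: C_def field_simps\<close>)
  show "(\<lambda>n. real (grid_count t n) / real b ^ n) \<longlonglongrightarrow> t"
    by (rule grid_count_ratio_tendsto[OF t(1)])
  have "(\<lambda>n. C * (1 / real n)) \<longlonglongrightarrow> C * 0"
    by (intro tendsto_mult tendsto_const lim_const_over_n)
  then show "(\<lambda>n. real (grid_count t n) / real b ^ n + C * (1 / real n)) \<longlonglongrightarrow> t"
    using tendsto_add[OF grid_count_ratio_tendsto[OF t(1)]] by fastforce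
qed

lemma AE_W_qvar_tendsto:
  assumes t: "0 \<le> t" "t \<le> 1"
  shows "AE \<omega> in M. (\<lambda>n. W_qvar t n \<omega> / real n) \<longlonglongrightarrow> t"
  using AE_W_qvar_deviation[OF t(2)]
proof eventually_elim
  case (elim \<omega>)
  have "(\<lambda>n. (W_qvar t n \<omega> - W_qvar_mean t n) / real n + W_qvar_mean t n / real n) \<longlonglongrightarrow> 0 + t"
    by (intro tendsto_add elim W_qvar_mean_tendsto t)
  then show ?case by (simp add: diff_divide_distrib)
qed

lemma expectation_sum_W_incr_pow4_le:
  "expectation (\<lambda>\<omega>. \<Sum>k<b^n. (W_incr n k \<omega>) ^ 4) \<le> 3 * real n ^ 4 * (\<alpha> ^ n * \<alpha> ^ n)"
proof -
  let ?s = "sqrt (1 / real b ^ n)"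
  have "?s ^ 4 = (?s\<^sup>2)\<^sup>2" unfolding power_mult[symmetric] by simp
  then have s4: "?s ^ 4 = 1 / real b ^ n * (1 / real b ^ n)"
    by (simp add: power2_eq_square)
  have gram_bounds: "0 \<le> gram n k k" "gram n k k \<le> real n ^ 2" for k
    using critical_coefs.gram_diag_ge[OF critical_coefs, of n k] critical_coefs.gram_diag_le[OF critical_coefs, of n k]
    by simp_all
  have "expectation (\<lambda>\<omega>. \<Sum>k<b^n. (W_incr n k \<omega>) ^ 4) = (\<Sum>k<b^n. 3 * ?s ^ 4 * (gram n k k)\<^sup>2)"
    unfolding W_incr_eq_lincomb
    using gaussian_family.integrable_lincomb_power[OF gaussian_level]
      gaussian_family.expectation_lincomb_pow4[OF gaussian_level]
    by (simp add: Bochner_Integration.integral_sum sqnorm_coef)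
  also have "\<dots> \<le> (\<Sum>k<b^n. 3 * ?s ^ 4 * (real n ^ 2)\<^sup>2)"
    using gram_bounds by (intro sum_mono mult_left_mono power_mono) auto
  also have "\<dots> = 3 * real n ^ 4 * (1 / real b ^ n)"
    using b_pos by (simp add: s4 power_mult[symmetric])
  also have "1 / real b ^ n = \<alpha> ^ n * \<alpha> ^ n"
    using critical_coefs.critical_power[OF critical_coefs, of n] b_pos by (simp add: field_simps)
  finally show ?thesis .
qed

definition \<beta> :: real where "\<beta> = sqrt (sqrt \<alpha>)"

lemma beta: "0 < \<beta>" "\<beta> < 1" "\<beta> ^ 4 = \<alpha>"
proof -
  show "0 < \<beta>" "\<beta> < 1" using alpha_pos alpha_less_1 by (auto simp: \<beta>_def)
  have "\<beta> ^ 4 = (sqrt (sqrt \<alpha>) ^ 2) ^ 2" by (simp add: \<beta>_def flip: power_mult)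
  then show "\<beta> ^ 4 = \<alpha>" using alpha_pos by simp
qed

lemma AE_summable_W_incr_pow4:
  "AE \<omega> in M. summable (\<lambda>n. (\<Sum>k<b^n. (W_incr n k \<omega>) ^ 4) / \<alpha> ^ n)"
proof -
  define f where "f n \<omega> = (\<Sum>k<b^n. (W_incr n k \<omega>) ^ 4) / \<alpha> ^ n" for n \<omega>
  have f_nonneg: "0 \<le> f n \<omega>" for n \<omega>
    using alpha_pos by (auto simp: f_def intro!: sum_nonneg divide_nonneg_pos)
  have f_meas: "f n \<in> borel_measurable M" for n
    unfolding f_def[abs_def] using measurable_W_incr by measurable
  have f_int: "integrable M (f n)" for n
    unfolding f_def[abs_def] W_incr_eq_lincomb using gaussian_family.integrable_lincomb_power[OF gaussian_level]
    by simp
  have E_bound: "expectation (f n) \<le> 3 * (real n ^ 4 * \<alpha> ^ n)" for n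
  proof -
    have "expectation (f n) = expectation (\<lambda>\<omega>. \<Sum>k<b^n. (W_incr n k \<omega>) ^ 4) / \<alpha> ^ n"
      unfolding f_def by (rule integral_divide_zero)
    also have "\<dots> \<le> 3 * real n ^ 4 * (\<alpha> ^ n * \<alpha> ^ n) / \<alpha> ^ n"
      by (rule divide_right_mono[OF expectation_sum_W_incr_pow4_le]) (use alpha_pos in simp)
    also have "\<dots> = 3 * (real n ^ 4 * \<alpha> ^ n)"
      using alpha_pos by simp
    finally show ?thesis .
  qed
  have "summable (\<lambda>n. expectation (f n))"
  proof (rule summable_comparison_test')
    show "summable (\<lambda>n. 3 * (real n ^ 4 * \<alpha> ^ n))"
      using summable_pow4_mult_geometric[of \<alpha>] alpha_pos alpha_less_1 by (intro summable_mult) auto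
    show "norm (expectation (f n)) \<le> 3 * (real n ^ 4 * \<alpha> ^ n)" for n
      using E_bound[of n] integral_nonneg_AE[of "f n" M] f_nonneg by simp
  qed
  then have "AE \<omega> in M. summable (\<lambda>n. f n \<omega>)"
    by (rule AE_summable_of_summable_expectation[OF f_meas f_nonneg f_int])
  then show ?thesis by (simp add: f_def)
qed

lemma AE_W_incr_small:
  "AE \<omega> in M. eventually (\<lambda>n. \<forall>k<b^n. \<bar>W_incr n k \<omega>\<bar> \<le> \<beta> ^ n) sequentially"
  using AE_summable_W_incr_pow4
proof eventually_elim
  case (elim \<omega>)
  have "(\<lambda>n. (\<Sum>k<b^n. (W_incr n k \<omega>) ^ 4) / \<alpha> ^ n) \<longlonglongrightarrow> 0"
    using elim by (rule summable_LIMSEQ_zero)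
  then have "eventually (\<lambda>n. (\<Sum>k<b^n. (W_incr n k \<omega>) ^ 4) / \<alpha> ^ n < 1) sequentially"
    by (rule order_tendstoD) simp
  then show ?case
  proof eventually_elim
    case (elim n)
    show ?case
    proof (intro allI impI)
      fix k assume "k < b ^ n"
      then have "(W_incr n k \<omega>) ^ 4 \<le> (\<Sum>k<b^n. (W_incr n k \<omega>) ^ 4)"
        by (intro member_le_sum) (auto simp: zero_le_even_power)
      also have "\<dots> \<le> \<alpha> ^ n" using elim alpha_pos by (simp add: divide_less_eq)
      also have "\<dots> = (\<beta> ^ n) ^ 4"
        using beta(3) by (metis power_mult mult.commute)
      finally have "\<bar>W_incr n k \<omega>\<bar> ^ 4 \<le> (\<beta> ^ n) ^ 4"
        by simp
      then show "\<bar>W_incr n k \<omega>\<bar> \<le> \<beta> ^ n"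
        using beta power_mono_iff[of "\<bar>W_incr n k \<omega>\<bar>" "\<beta> ^ n" 4] by simp
    qed
  qed
qed

lemma L2_set_kappa_part_le:
  assumes t: "t \<le> 1"
  shows "L2_set (\<lambda>k. W 1 \<omega> * kappa_incr n k) {..<grid_count t n} \<le> \<bar>W 1 \<omega>\<bar> * kappa_const"
proof -
  have "(W 1 \<omega> * kappa_incr n k)\<^sup>2 \<le> (\<bar>W 1 \<omega>\<bar> * (kappa_const * \<alpha> ^ n))\<^sup>2" for k
  proof -
    have "\<bar>W 1 \<omega> * kappa_incr n k\<bar> \<le> \<bar>W 1 \<omega>\<bar> * (kappa_const * \<alpha> ^ n)"
      unfolding abs_mult using abs_kappa_incr_le by (intro mult_left_mono) auto
    then show ?thesis
      using power_mono[of "\<bar>W 1 \<omega> * kappa_incr n k\<bar>" _ 2] by simp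
  qed
  then have "(\<Sum>k<grid_count t n. (W 1 \<omega> * kappa_incr n k)\<^sup>2)
               \<le> (\<Sum>k<grid_count t n. (\<bar>W 1 \<omega>\<bar> * (kappa_const * \<alpha> ^ n))\<^sup>2)"
    by (intro sum_mono)
  also have "\<dots> \<le> (\<Sum>k<b^n. (\<bar>W 1 \<omega>\<bar> * (kappa_const * \<alpha> ^ n))\<^sup>2)"
    using grid_count_le[OF t] by (intro sum_mono2) auto
  also have "\<dots> = (\<bar>W 1 \<omega>\<bar> * kappa_const)\<^sup>2 * (\<alpha> ^ n * \<alpha> ^ n * real b ^ n)"
    by (simp add: power2_eq_square algebra_simps)
  also have "\<dots> = (\<bar>W 1 \<omega>\<bar> * kappa_const)\<^sup>2"
    using critical_coefs.critical_power[OF critical_coefs] by simp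
  finally have "sqrt (\<Sum>k<grid_count t n. (W 1 \<omega> * kappa_incr n k)\<^sup>2) \<le> sqrt ((\<bar>W 1 \<omega>\<bar> * kappa_const)\<^sup>2)"
    by (rule real_sqrt_le_mono)
  then show ?thesis
    unfolding L2_set_def using kappa_const_nonneg by simp
qed

lemma sqrt_qvar_close:
  assumes \<omega>: "\<omega> \<in> space M" and t: "t \<le> 1"
  shows "\<bar>sqrt (X_qvar t n \<omega>) - sqrt (W_qvar t n \<omega>)\<bar> \<le> \<bar>W 1 \<omega>\<bar> * kappa_const"
proof -
  let ?K = "{..<grid_count t n}"
  have X_L2: "sqrt (X_qvar t n \<omega>) = L2_set (\<lambda>k. X_incr n k \<omega>) ?K"
    and W_L2: "sqrt (W_qvar t n \<omega>) = L2_set (\<lambda>k. W_incr n k \<omega>) ?K"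
    unfolding X_qvar_def W_qvar_def L2_set_def by simp_all
  have "L2_set (\<lambda>k. X_incr n k \<omega>) ?K \<le> L2_set (\<lambda>k. W_incr n k \<omega>) ?K + L2_set (\<lambda>k. - (W 1 \<omega> * kappa_incr n k)) ?K"
    using L2_set_triangle_ineq[of "\<lambda>k. W_incr n k \<omega>" "\<lambda>k. - (W 1 \<omega> * kappa_incr n k)" ?K]
    by (simp add: X_incr_eq[OF \<omega>])
  moreover have "L2_set (\<lambda>k. W_incr n k \<omega>) ?K \<le> L2_set (\<lambda>k. X_incr n k \<omega>) ?K + L2_set (\<lambda>k. W 1 \<omega> * kappa_incr n k) ?K"
    using L2_set_triangle_ineq[of "\<lambda>k. X_incr n k \<omega>" "\<lambda>k. W 1 \<omega> * kappa_incr n k" ?K]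
    by (simp add: X_incr_eq[OF \<omega>])
  moreover have "L2_set (\<lambda>k. - (W 1 \<omega> * kappa_incr n k)) ?K = L2_set (\<lambda>k. W 1 \<omega> * kappa_incr n k) ?K"
    unfolding L2_set_def by simp
  ultimately show ?thesis
    unfolding X_L2 W_L2 using L2_set_kappa_part_le[OF t, of \<omega> n] by linarith
qed

lemma eventually_X_incr_small:
  assumes \<omega>: "\<omega> \<in> space M"
    and W_small: "eventually (\<lambda>n. \<forall>k<b^n. \<bar>W_incr n k \<omega>\<bar> \<le> \<beta> ^ n) sequentially"
  shows "eventually (\<lambda>n. \<forall>k<b^n. \<bar>X_incr n k \<omega>\<bar> \<le> (1 + \<bar>W 1 \<omega>\<bar> * kappa_const) * \<beta> ^ n) sequentially"
  using W_small
proof eventually_elim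
  case (elim n)
  have "\<beta> ^ 4 \<le> \<beta> ^ 1" using beta by (intro power_decreasing) auto
  then have "\<alpha> ^ n \<le> \<beta> ^ n"
    using beta(3) alpha_pos by (intro power_mono) auto
  then have kappa_small: "\<bar>kappa_incr n k\<bar> \<le> kappa_const * \<beta> ^ n" for k
    using abs_kappa_incr_le[of n k] mult_left_mono[OF _ kappa_const_nonneg] by fastforce
  have "\<bar>X_incr n k \<omega>\<bar> \<le> (1 + \<bar>W 1 \<omega>\<bar> * kappa_const) * \<beta> ^ n" if "k < b ^ n" for k
  proof -
    have "\<bar>X_incr n k \<omega>\<bar> \<le> \<bar>W_incr n k \<omega>\<bar> + \<bar>W 1 \<omega>\<bar> * \<bar>kappa_incr n k\<bar>"
      unfolding X_incr_eq[OF \<omega>] by (simp add: abs_mult[symmetric] abs_triangle_ineq4)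
    also have "\<dots> \<le> \<beta> ^ n + \<bar>W 1 \<omega>\<bar> * (kappa_const * \<beta> ^ n)"
      using elim that kappa_small by (intro add_mono mult_left_mono) auto
    finally show ?thesis by (simp add: algebra_simps)
  qed
  then show ?case by blast
qed

theorem critical_ww_bridge_qvar_pvariation:
  "AE \<omega> in M.
     (\<forall>t\<in>{0<..1}. (\<lambda>n. X_qvar t n \<omega> / real n) \<longlonglongrightarrow> t) \<and>
     (\<forall>p. 0 < p \<and> p \<le> 2 \<longrightarrow> has_pvariation (\<lambda>s. ww_bridge W \<kappa> \<alpha> b s \<omega>) b p 1 \<infinity>) \<and>
     (\<forall>p. 2 < p \<longrightarrow> has_pvariation (\<lambda>s. ww_bridge W \<kappa> \<alpha> b s \<omega>) b p 1 0)"
proof -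
  have "countable (\<rat> \<inter> {0..1::real})" by (intro countable_Int1 countable_rat)
  then have "AE \<omega> in M. \<forall>q\<in>\<rat> \<inter> {0..1}. (\<lambda>n. W_qvar q n \<omega> / real n) \<longlonglongrightarrow> q"
    by (simp add: AE_ball_countable AE_W_qvar_tendsto)
  then show ?thesis
    using AE_W_incr_small AE_space
  proof eventually_elim
    case (elim \<omega>)
    have qvar_rat: "\<forall>q\<in>\<rat> \<inter> {0..1}. (\<lambda>n. X_qvar q n \<omega> / real n) \<longlonglongrightarrow> q"
    proof
      fix q :: real assume q: "q \<in> \<rat> \<inter> {0..1}"
      show "(\<lambda>n. X_qvar q n \<omega> / real n) \<longlonglongrightarrow> q"
      proof (rule tendsto_over_n_of_sqrt_close)
        show "0 \<le> X_qvar q n \<omega>" for n by (simp add: X_qvar_def sum_nonneg)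
        show "\<bar>sqrt (X_qvar q n \<omega>) - sqrt (W_qvar q n \<omega>)\<bar> \<le> \<bar>W 1 \<omega>\<bar> * kappa_const" for n
          using q by (intro sqrt_qvar_close[OF elim(3)]) auto
      qed (use q elim(1) in auto)
    qed
    have qvar: "(\<lambda>n. X_qvar t n \<omega> / real n) \<longlonglongrightarrow> t" if "t \<in> {0<..1}" for t
    proof (rule tendsto_of_monotone_rationals[where g="\<lambda>t n. X_qvar t n \<omega>"])
      show "X_qvar s n \<omega> \<le> X_qvar t n \<omega>" if "s \<le> t" for s t n
        unfolding X_qvar_def using grid_count_mono[OF that] by (intro sum_mono2) auto
    qed (use that qvar_rat in auto)
    have qvar_1: "(\<lambda>n. (\<Sum>k<b^n. (X_incr n k \<omega>)\<^sup>2) / real n) \<longlonglongrightarrow> 1"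
      using qvar[of 1] by (simp add: X_qvar_def grid_count_def nat_floor_b_power)
    note small = eventually_X_incr_small[OF elim(3) elim(2), unfolded X_incr_def]
    have "0 < 1 + \<bar>W 1 \<omega>\<bar> * kappa_const" using kappa_const_nonneg by (simp add: add_pos_nonneg)
    then show ?case
      using qvar beta(1,2)
        has_pvariation_infinity_of_qvar_linear[OF qvar_1[unfolded X_incr_def] small]
        has_pvariation_zero_of_qvar_linear[OF qvar_1[unfolded X_incr_def] small]
      by blast
  qed
qed

end

theorem theorem2p4:
  fixes M :: "'a measure" and W :: "real \<Rightarrow> 'a \<Rightarrow> real" and \<kappa> :: "real \<Rightarrow> real"
    and \<tau> \<alpha> :: real and b :: nat
  assumes BM: "brownian_motion M W"
    and kappa_range: "\<forall>t\<in>{0..1}. \<kappa> t \<in> {0..1}"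
    and kappa0: "\<kappa> 0 = 0" and kappa1: "\<kappa> 1 = 1"
    and tau: "1/2 < \<tau>" "\<tau> \<le> 1"
    and kappa_hoelder: "hoelder_on01 \<tau> \<kappa>"
    and alpha: "0 < \<alpha>" "\<alpha> < 1"
    and b: "2 \<le> b"
    and crit: "\<alpha>\<^sup>2 * real b = 1"
  shows "AE \<omega> in M.
     (\<forall>t\<in>{0<..1}.
        (\<lambda>n. (1 / real n) *
           (\<Sum>k<nat \<lfloor>t * real b ^ n\<rfloor>.
              (ww_bridge W \<kappa> \<alpha> b ((real k + 1) / real b ^ n) \<omega>
               - ww_bridge W \<kappa> \<alpha> b (real k / real b ^ n) \<omega>)\<^sup>2))
        \<longlonglongrightarrow> t) \<and>
     (\<forall>p. 0 < p \<and> p \<le> 2 \<longrightarrow> has_pvariation (\<lambda>s. ww_bridge W \<kappa> \<alpha> b s \<omega>) b p 1 \<infinity>) \<and>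
     (\<forall>p. 2 < p \<longrightarrow> has_pvariation (\<lambda>s. ww_bridge W \<kappa> \<alpha> b s \<omega>) b p 1 0)"
proof -
  interpret critical_ww_bridge M W \<kappa> \<tau> \<alpha> b
    using BM kappa0 kappa1 tau(1) kappa_hoelder alpha b crit by unfold_locales auto
  show ?thesis
    using critical_ww_bridge_qvar_pvariation
    by (simp add: X_qvar_def X_incr_def grid_count_def)
qed

end
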